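(* There is a constant $C>0$ such that for every $p\in\mathbb N$ and every polynomial $u$ of degree $\le p$ on $\widehat K$, writing $u=u_{\mathcal V}+u_{\mathcal E_1}+u_{\mathcal E_2}+u_{\mathcal E_3}+u_{\mathcal I}$ with $u_{\mathcal V}=\sum_{j=1}^3\alpha_j^{\mathcal V}\varphi_j^{\mathcal V}$, $u_{\mathcal E_m}=\sum_{j=0}^{p-2}\alpha_j^{\mathcal E_m}\varphi_j^{\mathcal E_m}$, $u_{\mathcal I}=\sum_{i+j\le p-3}\alpha^{\mathcal I}_{(ij)}\varphi^{\mathcal I}_{(ij)}$ (the expansion in the basis described in the context), one has $$\|u_{\mathcal V}\|^2_{L^2(\widehat K)}\le C\sum_{j=1}^3|\alpha^{\mathcal V}_j|^2,\quad\|u_{\mathcal E_m}\|^2_{L^2(\widehat K)}\le C\sum_{j=0}^{p-2}|\alpha_j^{\mathcal E_m}|^2\ (m=1,2,3),\quad\|u_{\mathcal I}\|^2_{L^2(\widehat K)}=\sum_{i+j\le p-3}|\alpha^{\mathcal I}_{(ij)}|^2,$$ and consequently $$\|u\|^2_{L^2(\widehat K)}\le C\Big(\sum_{j=1}^3|\alpha_j^{\mathcal V}|^2+\sum_{m=1}^3\sum_{j=0}^{p-2}|\alpha_j^{\mathcal E_m}|^2+\sum_{i+j\le p-3}|\alpha^{\mathcal I}_{(ij)}|^2\Big).$$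
   Context: $\widehat K=\mathrm{conv}\{(0,0),(1,0),(0,1)\}$ with barycentric coordinates $\lambda_1,\lambda_2,\lambda_3$ and edges $\mathcal E_1,\mathcal E_2,\mathcal E_3$. $\ell_n$ are the Legendre polynomials, $L_n(s):=\int_{-1}^s\ell_{n-1}(t)\,dt$ ($n\ge1$), $P_n^{(\alpha,\beta)}$ the Jacobi polynomials (orthogonal on $(-1,1)$ w.r.t. weight $(1-x)^\alpha(1+x)^\beta$, standard normalization), $L_n^{\mathcal S}(s,t):=t^nL_n(s/t)$, $P_n^{\mathcal S,(\alpha,\beta)}(s,t):=t^nP_n^{(\alpha,\beta)}(s/t)$. The basis of polynomials of degree $\le p$ on $\widehat K$: vertex functions $\varphi^{\mathcal V}_i:=\lambda_i$; for edge $\mathcal E_m$ with endpoints $e_1,e_2$, $\varphi^{\mathcal E_m}_i:=\sqrt{\tfrac{2i+3}{2}}L^{\mathcal S}_{i+2}(\lambda_{e_2}-\lambda_{e_1},\lambda_{e_1}+\lambda_{e_2})$, $0\le i\le p-2$; cell functions $\varphi^{\mathcal I}_{(i,j)}:=c_{ij}\lambda_1\lambda_2\lambda_3P_i^{\mathcal S,(2,2)}(\lambda_1-\lambda_2,\lambda_1+\lambda_2)P_j^{(2i+5,2)}(2\lambda_3-1)$, $0\le i+j\le p-3$, with $c_{ij}$ chosen so that $\|\varphi^{\mathcal I}_{(i,j)}\|_{L^2(\widehat K)}=1$. *)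

theory Defs
  imports "HOL-Analysis.Analysis"
begin

type_synonym pt = "real \<times> real"

definition Khat :: "pt set" where
  "Khat = convex hull {(0,0), (1,0), (0,1)}"

definition L2sq :: "(pt \<Rightarrow> real) \<Rightarrow> real" where
  "L2sq f = integral Khat (\<lambda>x. (f x)\<^sup>2)"

text \<open>Barycentric coordinates: vertex 1 = (0,0), vertex 2 = (1,0), vertex 3 = (0,1).\<close>
definition bary :: "nat \<Rightarrow> pt \<Rightarrow> real" where
  "bary i x = (if i = 1 then 1 - fst x - snd x else if i = 2 then fst x else snd x)"

definition jacobiP :: "nat \<Rightarrow> nat \<Rightarrow> nat \<Rightarrow> real \<Rightarrow> real" where
  "jacobiP n a b x = (\<Sum>s\<le>n. real ((n + a) choose (n - s)) * real ((n + b) choose s)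
       * ((x - 1) / 2) ^ s * ((x + 1) / 2) ^ (n - s))"

definition legendre :: "nat \<Rightarrow> real \<Rightarrow> real" where
  "legendre n x = jacobiP n 0 0 x"

definition intLegendre :: "nat \<Rightarrow> real \<Rightarrow> real" where
  "intLegendre n s = integral {-1..s} (legendre (n - 1))"

definition intLegendreS :: "nat \<Rightarrow> real \<Rightarrow> real \<Rightarrow> real" where
  "intLegendreS n s t = t ^ n * intLegendre n (s / t)"

definition jacobiS :: "nat \<Rightarrow> nat \<Rightarrow> nat \<Rightarrow> real \<Rightarrow> real \<Rightarrow> real" where
  "jacobiS n a b s t = t ^ n * jacobiP n a b (s / t)"

text \<open>Edge endpoints: E_1 = (V2,V3), E_2 = (V3,V1), E_3 = (V1,V2).\<close>
definition edge_e1 :: "nat \<Rightarrow> nat" where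
  "edge_e1 m = (if m = 1 then 2 else if m = 2 then 3 else 1)"
definition edge_e2 :: "nat \<Rightarrow> nat" where
  "edge_e2 m = (if m = 1 then 3 else if m = 2 then 1 else 2)"

definition vertex_fn :: "nat \<Rightarrow> pt \<Rightarrow> real" where
  "vertex_fn i x = bary i x"

definition edge_fn :: "nat \<Rightarrow> nat \<Rightarrow> pt \<Rightarrow> real" where
  "edge_fn m i x = sqrt ((2 * real i + 3) / 2) *
     intLegendreS (i + 2) (bary (edge_e2 m) x - bary (edge_e1 m) x)
                          (bary (edge_e1 m) x + bary (edge_e2 m) x)"

definition cell_fn_raw :: "nat \<Rightarrow> nat \<Rightarrow> pt \<Rightarrow> real" where
  "cell_fn_raw i j x = bary 1 x * bary 2 x * bary 3 x *
     jacobiS i 2 2 (bary 1 x - bary 2 x) (bary 1 x + bary 2 x) *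
     jacobiP j (2 * i + 5) 2 (2 * bary 3 x - 1)"

definition cell_const :: "nat \<Rightarrow> nat \<Rightarrow> real" where
  "cell_const i j = 1 / sqrt (L2sq (cell_fn_raw i j))"

definition cell_fn :: "nat \<Rightarrow> nat \<Rightarrow> pt \<Rightarrow> real" where
  "cell_fn i j x = cell_const i j * cell_fn_raw i j x"

definition edge_idx :: "nat \<Rightarrow> nat set" where
  "edge_idx p = {j. j + 2 \<le> p}"
definition cell_idx :: "nat \<Rightarrow> (nat \<times> nat) set" where
  "cell_idx p = {(i, j). i + j + 3 \<le> p}"

end

theory Submission
  imports Defs "HOL-Computational_Algebra.Polynomial"
begin

text \<open>
  Since \<open>\<lambda>_i^2 \<le> \<lambda>_i\<close> on the triangle, Cauchy--Schwarz bounds the vertex part. For the other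
  parts one passes to Duffy coordinates \<open>x = (1 - y)(1 + u)/2\<close>, \<open>u \<in> [-1, 1]\<close>.
  Because \<open>L_{j+2} = (\<ell>_{j+2} - \<ell>_j) / (2j + 3)\<close>, an edge function becomes a multiple of
  \<open>(1 - y)^{j+2} (\<ell>_{j+2} - \<ell>_j)(u)\<close>, whose squared norm is \<open>O(1/j^2)\<close>; these norms are
  summable, so Cauchy--Schwarz again bounds each edge part. A cell function becomes the product
  of \<open>P_i^{(2,2)}(u)\<close> and \<open>P_j^{(2i+5,2)}(2y - 1)\<close> with exactly the weights for which these Jacobi
  polynomials are orthogonal, so the normalized cell functions are orthonormal and the cell part
  satisfies Parseval's identity. Jacobi orthogonality itself comes from Rodrigues' formula and
  repeated integration by parts. Finally \<open>(a + b + c + d + e)^2 \<le> 5 (a^2 + b^2 + c^2 + d^2 + e^2)\<close>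
  combines the five parts.
\<close>

section \<open>Jacobi polynomials\<close>

lemma sum_binomial_pascal:
  fixes f g :: "nat \<Rightarrow> 'a::comm_semiring_1"
  shows "(\<Sum>k\<le>n. of_nat (n choose k) * (f k * g (Suc n - k))) +
         (\<Sum>k\<le>n. of_nat (n choose k) * (f (Suc k) * g (n - k))) =
         (\<Sum>k\<le>Suc n. of_nat (Suc n choose k) * (f k * g (Suc n - k)))"
proof -
  have "(\<Sum>k\<le>n. of_nat (n choose k) * (f k * g (Suc n - k))) =
        (\<Sum>k\<le>Suc n. of_nat (n choose k) * (f k * g (Suc n - k)))"
    by (simp add: sum.atMost_Suc binomial_eq_0)
  also have "\<dots> = f 0 * g (Suc n) + (\<Sum>k\<le>n. of_nat (n choose Suc k) * (f (Suc k) * g (n - k)))"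
    by (subst sum.atMost_Suc_shift) simp
  finally have shifted: "(\<Sum>k\<le>n. of_nat (n choose k) * (f k * g (Suc n - k))) =
      f 0 * g (Suc n) + (\<Sum>k\<le>n. of_nat (n choose Suc k) * (f (Suc k) * g (n - k)))" .
  have "(\<Sum>k\<le>Suc n. of_nat (Suc n choose k) * (f k * g (Suc n - k))) =
        f 0 * g (Suc n) + (\<Sum>k\<le>n. of_nat (Suc n choose Suc k) * (f (Suc k) * g (n - k)))"
    by (subst sum.atMost_Suc_shift) simp
  also have "\<dots> = f 0 * g (Suc n) + (\<Sum>k\<le>n. of_nat (n choose Suc k) * (f (Suc k) * g (n - k)))
         + (\<Sum>k\<le>n. of_nat (n choose k) * (f (Suc k) * g (n - k)))"
    by (simp add: sum.distrib algebra_simps)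
  finally show ?thesis using shifted by simp
qed

lemma higher_pderiv_mult:
  fixes p q :: "'a::{comm_semiring_1,semiring_no_zero_divisors} poly"
  shows "(pderiv ^^ n) (p * q) =
    (\<Sum>k\<le>n. of_nat (n choose k) * ((pderiv ^^ k) p * (pderiv ^^ (n - k)) q))"
proof (induction n arbitrary: p q)
  case 0
  show ?case by simp
next
  case (Suc n)
  have "(pderiv ^^ Suc n) (p * q) = (pderiv ^^ n) (p * pderiv q) + (pderiv ^^ n) (pderiv p * q)"
    by (simp add: funpow_Suc_right pderiv_mult higher_pderiv_add mult.commute del: funpow.simps)
  also have "\<dots> = (\<Sum>k\<le>n. of_nat (n choose k) * ((pderiv ^^ k) p * (pderiv ^^ (Suc n - k)) q))
     + (\<Sum>k\<le>n. of_nat (n choose k) * ((pderiv ^^ Suc k) p * (pderiv ^^ (n - k)) q))"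
    unfolding Suc.IH
    by (intro arg_cong2[where f="(+)"] sum.cong refl)
       (simp_all add: funpow_Suc_right Suc_diff_le del: funpow.simps)
  also have "\<dots> = (\<Sum>k\<le>Suc n. of_nat (Suc n choose k) * ((pderiv ^^ k) p * (pderiv ^^ (Suc n - k)) q))"
    by (rule sum_binomial_pascal)
  finally show ?case .
qed

lemma higher_pderiv_linear_power:
  fixes c :: "'a::field_char_0"
  assumes "k \<le> m"
  shows "(pderiv ^^ k) ([:c, 1:] ^ m) = smult (fact m / fact (m - k)) ([:c, 1:] ^ (m - k))"
  using assms
proof (induction k)
  case 0
  then show ?case by simp
next
  case (Suc k)
  then obtain r where r: "m - k = Suc r"
    by (metis Suc_diff_Suc Suc_le_lessD)
  have "(pderiv ^^ Suc k) ([:c, 1:] ^ m) = smult (fact m / fact (m - k)) (pderiv ([:c, 1:] ^ Suc r))"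
    using Suc r by (simp add: pderiv_smult)
  also have "pderiv ([:c, 1:] ^ Suc r) = smult (of_nat (Suc r)) ([:c, 1:] ^ r)"
    by (simp only: pderiv_power_Suc) (simp add: pderiv_pCons)
  also have "smult (fact m / fact (m - k)) (smult (of_nat (Suc r)) ([:c, 1:] ^ r)) =
      smult (fact m / fact (m - k) * of_nat (Suc r)) ([:c, 1:] ^ r)"
    by simp
  also have "fact m / fact (m - k) * of_nat (Suc r) = (fact m / fact (m - Suc k) :: 'a)"
    using r by (simp add: fact_Suc field_simps del: of_nat_Suc) (metis Suc_diff_Suc diff_Suc_1 r zero_less_Suc zero_less_diff)
  also have "r = m - Suc k"
    using r by simp
  finally show ?case .
qed

lemma linear_power_dvd_higher_pderiv:
  fixes p :: "'a::{comm_semiring_1,semiring_no_zero_divisors} poly"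
  assumes "[:c, 1:] ^ (k + m) dvd p"
  shows "[:c, 1:] ^ m dvd (pderiv ^^ k) p"
  using assms
proof (induction k arbitrary: p)
  case 0
  then show ?case by simp
next
  case (Suc k)
  then obtain r where r: "p = [:c, 1:] ^ Suc (k + m) * r"
    by (auto elim: dvdE)
  have "pderiv p = [:c, 1:] ^ (k + m) * ([:c, 1:] * pderiv r + smult (of_nat (Suc (k + m))) r)"
    unfolding r pderiv_mult pderiv_power_Suc by (simp add: pderiv_pCons algebra_simps)
  then have "[:c, 1:] ^ m dvd (pderiv ^^ k) (pderiv p)"
    by (intro Suc.IH) simp
  then show ?case
    by (simp add: funpow_Suc_right del: funpow.simps)
qed

lemma higher_pderiv_eq_0_if_degree_less:
  fixes q :: "'a::{comm_semiring_1,semiring_no_zero_divisors} poly"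
  assumes "degree q < n"
  shows "(pderiv ^^ n) q = 0"
proof (rule poly_eqI)
  fix i
  have "coeff q (i + n) = 0"
    using assms by (intro coeff_eq_0) simp
  then show "coeff ((pderiv ^^ n) q) i = coeff 0 i"
    by (simp add: coeff_higher_pderiv)
qed

lemma degree_linear_power_le: "degree ([:c, d:] ^ k) \<le> k"
proof -
  have "degree ([:c, d:] ^ k) \<le> k * degree [:c, d:]"
    by (metis degree_power_le mult.commute)
  also have "\<dots> \<le> k"
    by (cases "d = 0") auto
  finally show ?thesis .
qed

definition jacobi_poly :: "nat \<Rightarrow> nat \<Rightarrow> nat \<Rightarrow> real poly" where
  "jacobi_poly n a b = (\<Sum>s\<le>n. smult (real ((n + a) choose (n - s)) * real ((n + b) choose s))
                 ([:-1/2, 1/2:] ^ s * [:1/2, 1/2:] ^ (n - s)))"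

lemma poly_jacobi_poly [simp]: "poly (jacobi_poly n a b) x = jacobiP n a b x"
  unfolding jacobi_poly_def jacobiP_def by (simp add: poly_sum field_simps)

lemma degree_jacobi_poly_le: "degree (jacobi_poly n a b) \<le> n"
  unfolding jacobi_poly_def
proof (intro degree_sum_le order.trans[OF degree_smult_le] order.trans[OF degree_mult_le])
  fix s
  assume "s \<in> {..n}"
  then show "degree ([:-1/2, 1/2:] ^ s :: real poly) + degree ([:1/2, 1/2:] ^ (n - s) :: real poly) \<le> n"
    using degree_linear_power_le[of "-(1/2) :: real" "1/2" s]
      degree_linear_power_le[of "1/2 :: real" "1/2" "n - s"]
    by simp
qed simp

lemma jacobiP_one: "jacobiP n a b 1 = real ((n + a) choose n)"
proof -
  have "jacobiP n a b 1 = (\<Sum>s\<le>n. if s = 0 then real ((n + a) choose n) else 0)"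
    unfolding jacobiP_def by (intro sum.cong refl) auto
  then show ?thesis by simp
qed

lemma jacobi_poly_neq_0: "jacobi_poly n a b \<noteq> 0"
proof
  assume "jacobi_poly n a b = 0"
  then have "jacobiP n a b 1 = 0"
    by (metis poly_0 poly_jacobi_poly)
  then show False
    unfolding jacobiP_one by simp
qed

definition rodrigues_poly :: "nat \<Rightarrow> nat \<Rightarrow> nat \<Rightarrow> real poly" where
  "rodrigues_poly n a b = [:-1, 1:] ^ (n + a) * [:1, 1:] ^ (n + b)"

lemma smult_sum_right: "smult c (sum f A) = (\<Sum>i\<in>A. smult c (f i))"
  by (induction A rule: infinite_finite_induct) (simp_all add: smult_add_right)

lemma higher_pderiv_rodrigues_poly:
  "(pderiv ^^ n) (rodrigues_poly n a b) =
   (\<Sum>s\<le>n. smult (fact n * real ((n + a) choose (n - s)) * real ((n + b) choose s))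
      ([:-1, 1:] ^ (a + s) * [:1, 1:] ^ (b + (n - s))))"
proof -
  have "(pderiv ^^ n) (rodrigues_poly n a b) = (pderiv ^^ n) ([:1, 1:] ^ (n + b) * [:-1, 1:] ^ (n + a))"
    by (simp add: rodrigues_poly_def mult.commute)
  also have "\<dots> = (\<Sum>s\<le>n. of_nat (n choose s) *
      (smult (fact (n + b) / fact (n + b - s)) ([:1, 1:] ^ (n + b - s)) *
       smult (fact (n + a) / fact (n + a - (n - s))) ([:-1, 1:] ^ (n + a - (n - s)))))"
    unfolding higher_pderiv_mult
    by (intro sum.cong refl, subst higher_pderiv_linear_power, simp,
        subst higher_pderiv_linear_power, simp_all)
  also have "\<dots> = (\<Sum>s\<le>n. smult (fact n * real ((n + a) choose (n - s)) * real ((n + b) choose s))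
      ([:-1, 1:] ^ (a + s) * [:1, 1:] ^ (b + (n - s))))"
  proof (intro sum.cong refl)
    fix s
    assume "s \<in> {..n}"
    then have s: "s \<le> n"
      by simp
    have "real (n choose s) * (fact (n + b) / fact (n + b - s)) * (fact (n + a) / fact (n + a - (n - s)))
        = fact n * real ((n + a) choose (n - s)) * real ((n + b) choose s)"
      using s by (simp add: binomial_fact mult_ac)
    moreover have "n + b - s = b + (n - s)" "n + a - (n - s) = a + s"
      using s by simp_all
    ultimately show "of_nat (n choose s) *
        (smult (fact (n + b) / fact (n + b - s)) ([:1, 1:] ^ (n + b - s)) *
         smult (fact (n + a) / fact (n + a - (n - s))) ([:-1, 1:] ^ (n + a - (n - s)))) =
        smult (fact n * real ((n + a) choose (n - s)) * real ((n + b) choose s))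
          ([:-1, 1:] ^ (a + s) * [:1, 1:] ^ (b + (n - s)))"
      by (simp add: of_nat_mult_conv_smult mult_ac)
  qed
  finally show ?thesis .
qed

lemma rodrigues_formula:
  "smult (2 ^ n * fact n) ([:-1, 1:] ^ a * [:1, 1:] ^ b * jacobi_poly n a b) =
   (pderiv ^^ n) (rodrigues_poly n a b)"
proof -
  have e: "[:-1/2, 1/2:] = smult (1/2) [:-1 :: real, 1:]" "[:1/2, 1/2:] = smult (1/2) [:1 :: real, 1:]"
    by simp_all
  have "[:-1/2, 1/2:] ^ s * [:1/2, 1/2:] ^ (n - s) = smult ((1 / 2) ^ n) ([:-1, 1:] ^ s * [:1 :: real, 1:] ^ (n - s))"
    if "s \<le> n" for s
    unfolding e smult_power mult_smult_left mult_smult_right smult_smult power_add[symmetric]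
    using that by simp
  then show ?thesis
    unfolding higher_pderiv_rodrigues_poly jacobi_poly_def
    by (simp add: sum_distrib_left smult_sum_right power_add mult_ac power_one_over del: add_diff_assoc)
qed

lemma poly_higher_pderiv_eq_0_if_root_power:
  fixes p :: "'a::idom poly"
  assumes "[:-x, 1:] ^ n dvd p" and "k < n"
  shows "poly ((pderiv ^^ k) p) x = 0"
proof -
  have "[:-x, 1:] ^ (k + (n - k)) dvd p"
    using assms by simp
  then have "[:-x, 1:] ^ (n - k) dvd (pderiv ^^ k) p"
    by (rule linear_power_dvd_higher_pderiv)
  moreover have "[:-x, 1:] dvd [:-x, 1:] ^ (n - k)"
    using assms(2) by (simp add: dvd_power)
  ultimately show ?thesis
    by (simp add: poly_eq_0_iff_dvd dvd_trans[rotated])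
qed

lemma higher_pderiv_rodrigues_poly_at_pm1:
  assumes "k < n"
  shows "poly ((pderiv ^^ k) (rodrigues_poly n a b)) 1 = 0"
    and "poly ((pderiv ^^ k) (rodrigues_poly n a b)) (-1) = 0"
proof -
  have "[:- 1, 1:] ^ (n + a) dvd rodrigues_poly n a b" "[:- (-1), 1:] ^ (n + b) dvd rodrigues_poly n a b"
    unfolding rodrigues_poly_def by simp_all
  then show "poly ((pderiv ^^ k) (rodrigues_poly n a b)) 1 = 0"
    and "poly ((pderiv ^^ k) (rodrigues_poly n a b)) (-1) = 0"
    using assms by (auto intro: poly_higher_pderiv_eq_0_if_root_power)
qed

definition poly_integral :: "real poly \<Rightarrow> real" where
  "poly_integral p = integral {-1..1} (poly p)"

lemma poly_has_integral_pderiv: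
  fixes p :: "real poly"
  assumes "a \<le> b"
  shows "(poly (pderiv p) has_integral (poly p b - poly p a)) {a..b}"
  by (rule fundamental_theorem_of_calculus[OF assms])
     (auto intro!: DERIV_subset[OF poly_DERIV] simp: has_real_derivative_iff_has_vector_derivative[symmetric])

lemma poly_integrable_on: "poly p integrable_on {a..b :: real}"
  by (rule integrable_continuous_interval) (auto intro: continuous_intros)

lemma poly_integral_0 [simp]: "poly_integral 0 = 0"
proof -
  have "poly 0 = (\<lambda>x. 0 :: real)"
    by auto
  then show ?thesis
    unfolding poly_integral_def by simp
qed

lemma poly_integral_pderiv: "poly_integral (pderiv p) = poly p 1 - poly p (-1)"
  unfolding poly_integral_def using poly_has_integral_pderiv[of "-1" 1 p]
  by (simp add: integral_unique)

lemma poly_integral_diff: "poly_integral (p - q) = poly_integral p - poly_integral q"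
proof -
  have "poly (p - q) = (\<lambda>x. poly p x - poly q x)"
    by auto
  then show ?thesis
    unfolding poly_integral_def by (simp add: integral_diff poly_integrable_on)
qed

lemma poly_integral_smult: "poly_integral (smult c p) = c * poly_integral p"
proof -
  have "poly (smult c p) = (\<lambda>x. c * poly p x)"
    by auto
  then show ?thesis
    unfolding poly_integral_def by simp
qed

lemma poly_integral_mult: "poly_integral (p * q) = integral {-1..1} (\<lambda>x. poly p x * poly q x)"
proof -
  have "poly (p * q) = (\<lambda>x. poly p x * poly q x)"
    by auto
  then show ?thesis
    unfolding poly_integral_def by simp
qed

text \<open>All boundary terms vanish since the lower derivatives of the Rodrigues polynomial vanish at \<open>\<plusminus>1\<close>.\<close>

lemma poly_integral_mult_higher_pderiv_rodrigues:
  assumes "k \<le> n"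
  shows "poly_integral (q * (pderiv ^^ k) (rodrigues_poly n a b)) =
         (-1) ^ k * poly_integral ((pderiv ^^ k) q * rodrigues_poly n a b)"
  using assms
proof (induction k arbitrary: q)
  case 0
  then show ?case by simp
next
  case (Suc j)
  define V where "V = (pderiv ^^ j) (rodrigues_poly n a b)"
  have j: "j < n"
    using Suc.prems by simp
  have "q * (pderiv ^^ Suc j) (rodrigues_poly n a b) = pderiv (q * V) - pderiv q * V"
    by (simp add: V_def pderiv_mult algebra_simps)
  then have "poly_integral (q * (pderiv ^^ Suc j) (rodrigues_poly n a b)) =
      poly_integral (pderiv (q * V)) - poly_integral (pderiv q * V)"
    by (simp add: poly_integral_diff)
  also have "poly_integral (pderiv (q * V)) = 0"
    unfolding poly_integral_pderiv using higher_pderiv_rodrigues_poly_at_pm1[OF j]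
    by (simp add: V_def)
  also have "poly_integral (pderiv q * V) = (-1) ^ j * poly_integral ((pderiv ^^ Suc j) q * rodrigues_poly n a b)"
    unfolding V_def using Suc.IH[of "pderiv q"] j
    by (simp add: funpow_Suc_right del: funpow.simps)
  finally show ?case
    by simp
qed

lemma jacobiP_weighted_eq_rodrigues:
  "(1 - x) ^ a * (1 + x) ^ b * jacobiP n a b x =
   (-1) ^ a / (2 ^ n * fact n) * poly ((pderiv ^^ n) (rodrigues_poly n a b)) x"
proof -
  have "poly ((pderiv ^^ n) (rodrigues_poly n a b)) x = 2 ^ n * fact n * ((x - 1) ^ a * (1 + x) ^ b * jacobiP n a b x)"
    unfolding rodrigues_formula[symmetric] by (simp add: algebra_simps)
  moreover have "(x - 1) ^ a = (-1) ^ a * (1 - x) ^ a"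
    by (metis minus_diff_eq mult_minus1 power_minus)
  ultimately show ?thesis
    by (simp add: field_simps)
qed

lemma jacobiP_orthogonal:
  assumes "degree q < n"
  shows "integral {-1..1} (\<lambda>x. (1 - x) ^ a * (1 + x) ^ b * jacobiP n a b x * poly q x) = 0"
proof -
  have "(\<lambda>x. (1 - x) ^ a * (1 + x) ^ b * jacobiP n a b x * poly q x) =
        (\<lambda>x. (-1) ^ a / (2 ^ n * fact n) * poly (q * (pderiv ^^ n) (rodrigues_poly n a b)) x)"
    by (rule ext, subst jacobiP_weighted_eq_rodrigues, simp)
  then have "integral {-1..1} (\<lambda>x. (1 - x) ^ a * (1 + x) ^ b * jacobiP n a b x * poly q x) =
      (-1) ^ a / (2 ^ n * fact n) * poly_integral (q * (pderiv ^^ n) (rodrigues_poly n a b))"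
    by (simp add: poly_integral_mult)
  also have "poly_integral (q * (pderiv ^^ n) (rodrigues_poly n a b)) = 0"
    unfolding poly_integral_mult_higher_pderiv_rodrigues[OF order_refl]
      higher_pderiv_eq_0_if_degree_less[OF assms]
    by simp
  finally show ?thesis
    by simp
qed

lemma jacobiP_weighted_norm_pos:
  "0 < integral {-1..1} (\<lambda>x. (1 - x) ^ a * (1 + x) ^ b * (jacobiP n a b x)\<^sup>2)"
proof -
  define f where "f = (\<lambda>x::real. (1 - x) ^ a * (1 + x) ^ b * (jacobiP n a b x)\<^sup>2)"
  have cont: "continuous_on {-1..1} f"
    unfolding f_def jacobiP_def by (auto intro!: continuous_intros)
  have nonneg: "\<And>x. x \<in> {-1..1} \<Longrightarrow> 0 \<le> f x"
    unfolding f_def by auto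
  have "finite {x. poly (jacobi_poly n a b) x = 0}"
    by (rule poly_roots_finite[OF jacobi_poly_neq_0])
  then have "infinite ({-1<..<1} - {x. poly (jacobi_poly n a b) x = 0})"
    by (intro Diff_infinite_finite infinite_Ioo) simp_all
  then obtain x where x: "x \<in> {-1<..<1} - {x. poly (jacobi_poly n a b) x = 0}"
    using infinite_imp_nonempty by blast
  then have "0 < f x"
    unfolding f_def by simp
  then have "\<not> (\<forall>x\<in>{-1..1}. f x = 0)"
    using x by force
  then have "integral {-1..1} f \<noteq> 0"
    using integral_eq_0_iff[OF cont _ nonneg] by simp
  moreover have "0 \<le> integral {-1..1} f"
    by (rule integral_nonneg[OF integrable_continuous_interval[OF cont]]) (use nonneg in auto)
  ultimately show ?thesis
    unfolding f_def by simp
qed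

section \<open>Legendre polynomials\<close>

definition sq_minus_one :: "real poly" where
  "sq_minus_one = [:-1, 0, 1:]"

lemma poly_sq_minus_one: "poly sq_minus_one x = x\<^sup>2 - 1"
  by (simp add: sq_minus_one_def power2_eq_square)

lemma rodrigues_poly_legendre: "rodrigues_poly n 0 0 = sq_minus_one ^ n"
proof -
  have "[:-1, 1:] * [:1, 1:] = sq_minus_one"
    by (simp add: sq_minus_one_def)
  then show ?thesis
    unfolding rodrigues_poly_def by (simp add: power_mult_distrib[symmetric])
qed

lemma rodrigues_formula_legendre:
  "smult (2 ^ n * fact n) (jacobi_poly n 0 0) = (pderiv ^^ n) (sq_minus_one ^ n)"
  using rodrigues_formula[of n 0 0] by (simp add: rodrigues_poly_legendre)

lemma legendre_eq_poly: "legendre n = poly (jacobi_poly n 0 0)"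
  by (simp add: fun_eq_iff legendre_def)

lemma higher_pderiv_sq_minus_one_power: "(pderiv ^^ (2 * n)) (sq_minus_one ^ n) = [:fact (2 * n):]"
proof (rule poly_eqI)
  have deg: "degree (sq_minus_one ^ n) = 2 * n"
    by (subst degree_power_eq) (simp_all add: sq_minus_one_def)
  fix i
  show "coeff ((pderiv ^^ (2 * n)) (sq_minus_one ^ n)) i = coeff [:fact (2 * n):] i"
  proof (cases "i = 0")
    case True
    have "coeff (sq_minus_one ^ n) (2 * n) = 1"
      using lead_coeff_power[of sq_minus_one n] deg by (simp add: sq_minus_one_def)
    then show ?thesis
      using True by (simp add: coeff_higher_pderiv pochhammer_fact[symmetric])
  next
    case False
    then have "coeff (sq_minus_one ^ n) (i + 2 * n) = 0"
      by (intro coeff_eq_0) (simp add: deg)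
    then show ?thesis
      using False by (simp add: coeff_higher_pderiv coeff_pCons split: nat.split)
  qed
qed

lemma higher_pderiv_legendre:
  "(pderiv ^^ n) (jacobi_poly n 0 0) = [:fact (2 * n) / (2 ^ n * fact n):]"
proof -
  define c :: real where "c = 2 ^ n * fact n"
  have "smult c ((pderiv ^^ n) (jacobi_poly n 0 0)) = (pderiv ^^ (n + n)) (sq_minus_one ^ n)"
    by (simp add: c_def rodrigues_formula_legendre[symmetric] higher_pderiv_smult funpow_add)
  also have "\<dots> = smult c [:fact (2 * n) / c:]"
    by (simp add: mult_2[symmetric] higher_pderiv_sq_minus_one_power c_def)
  finally show ?thesis
    unfolding c_def by (rule smult_cancel[rotated]) simp
qed

lemma fact_double_div_square_eq_binomial:
  "fact (2 * n) / (2 ^ n * fact n)\<^sup>2 = real ((2 * n) choose n) / 4 ^ n"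
proof -
  have "fact n * fact (2 * n - n) * ((2 * n) choose n) = (fact (2 * n) :: nat)"
    by (rule binomial_fact_lemma) simp
  then have "(fact (2 * n) :: real) = fact n * fact n * real ((2 * n) choose n)"
    by (metis diff_add_inverse mult_2 of_nat_fact of_nat_mult)
  moreover have "(2 ^ n * fact n)\<^sup>2 = 4 ^ n * (fact n * fact n :: real)"
    by (simp add: power2_eq_square power_mult_distrib[symmetric])
  ultimately show ?thesis
    by simp
qed

text \<open>Integrating by parts \<open>n\<close> times moves all derivatives from the Rodrigues form of one factor
  onto the other factor, which then becomes a constant.\<close>

lemma legendre_sq_integral_eq:
  "integral {-1..1} (\<lambda>x. (legendre n x)\<^sup>2) =
   real ((2 * n) choose n) / 4 ^ n * integral {-1..1} (\<lambda>x. (1 - x\<^sup>2) ^ n)"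
proof -
  define J where "J = jacobi_poly n 0 0"
  define c :: real where "c = 2 ^ n * fact n"
  have c: "c \<noteq> 0"
    by (simp add: c_def)
  have "integral {-1..1} (\<lambda>x. (legendre n x)\<^sup>2) = poly_integral (J * J)"
    by (simp add: poly_integral_mult legendre_eq_poly J_def power2_eq_square)
  also have "J * J = smult (1 / c) (J * (pderiv ^^ n) (rodrigues_poly n 0 0))"
    using c by (simp add: J_def c_def rodrigues_poly_legendre rodrigues_formula_legendre[symmetric])
  also have "poly_integral \<dots> = (1 / c) * ((-1) ^ n * poly_integral ((pderiv ^^ n) J * rodrigues_poly n 0 0))"
    by (simp add: poly_integral_smult poly_integral_mult_higher_pderiv_rodrigues)
  also have "poly_integral ((pderiv ^^ n) J * rodrigues_poly n 0 0) =
      fact (2 * n) / c * poly_integral (rodrigues_poly n 0 0)"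
    by (simp add: J_def c_def higher_pderiv_legendre poly_integral_smult)
  finally have "integral {-1..1} (\<lambda>x. (legendre n x)\<^sup>2) =
      fact (2 * n) / c\<^sup>2 * ((-1) ^ n * poly_integral (rodrigues_poly n 0 0))"
    by (simp add: power2_eq_square field_simps)
  moreover have "(-1) ^ n * poly (rodrigues_poly n 0 0) x = (1 - x\<^sup>2) ^ n" for x
    by (simp add: rodrigues_poly_legendre poly_power poly_sq_minus_one power_mult_distrib[symmetric])
  ultimately show ?thesis
    unfolding c_def fact_double_div_square_eq_binomial poly_integral_def
    by (simp flip: integral_mult_right)
qed

lemma legendre_sq_integral_le: "integral {-1..1} (\<lambda>x. (legendre n x)\<^sup>2) \<le> 2"
proof -
  have int: "(\<lambda>x::real. (1 - x\<^sup>2) ^ n) integrable_on {-1..1}"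
    by (intro integrable_continuous_interval continuous_intros)
  have bound: "0 \<le> (1 - x\<^sup>2) ^ n \<and> (1 - x\<^sup>2) ^ n \<le> 1" if "x \<in> {-1..1}" for x :: real
  proof -
    have "x\<^sup>2 \<le> 1"
      using that by (auto simp: abs_square_le_1)
    then show ?thesis
      by (simp add: power_le_one)
  qed
  have "integral {-1..1} (\<lambda>x::real. (1 - x\<^sup>2) ^ n) \<le> integral {-1..1} (\<lambda>x::real. 1)"
    using bound by (intro integral_le int) auto
  moreover have "0 \<le> integral {-1..1} (\<lambda>x::real. (1 - x\<^sup>2) ^ n)"
    using bound by (intro integral_nonneg int) auto
  moreover have "real ((2 * n) choose n) / 4 ^ n \<le> 1"
  proof -
    have "(2 * n) choose n \<le> 4 ^ n"
      using binomial_le_pow2[of "2 * n" n] by (simp add: power_mult)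
    then have "real ((2 * n) choose n) \<le> 4 ^ n"
      by (metis of_nat_le_iff of_nat_numeral of_nat_power)
    then show ?thesis
      by simp
  qed
  ultimately have "real ((2 * n) choose n) / 4 ^ n * integral {-1..1} (\<lambda>x. (1 - x\<^sup>2) ^ n) \<le> 1 * 2"
    by (intro mult_mono) auto
  then show ?thesis
    unfolding legendre_sq_integral_eq by simp
qed

lemma higher_pderiv_2_sq_minus_one_power:
  "(pderiv ^^ 2) (sq_minus_one ^ (m + 2)) =
   smult (2 * real (m + 2) * (2 * real m + 3)) (sq_minus_one ^ (m + 1)) +
   smult (4 * real (m + 2) * real (m + 1)) (sq_minus_one ^ m)"
proof -
  let ?Q = sq_minus_one
  have dQ: "pderiv ?Q = [:0, 2:]"
    by (simp add: sq_minus_one_def pderiv_pCons)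
  have sq: "[:0, 2:] * [:0, 2:] = smult 4 (?Q + 1)"
    by (simp add: sq_minus_one_def one_pCons)
  have d1: "pderiv (?Q ^ (m + 2)) = smult (real (m + 2)) (?Q ^ (m + 1) * [:0, 2:])"
    using pderiv_power_Suc[of ?Q "m + 1"] by (simp add: dQ) (simp add: algebra_simps)
  have d1': "pderiv (?Q ^ (m + 1)) = smult (real (m + 1)) (?Q ^ m * [:0, 2:])"
    using pderiv_power_Suc[of ?Q m] by (simp add: dQ) (simp add: algebra_simps)
  have "(pderiv ^^ 2) (?Q ^ (m + 2)) = pderiv (pderiv (?Q ^ (m + 2)))"
    by (simp add: numeral_2_eq_2)
  also have "\<dots> = smult (real (m + 2)) (?Q ^ (m + 1) * [:2:] + [:0, 2:] * smult (real (m + 1)) (?Q ^ m * [:0, 2:]))"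
    unfolding d1 pderiv_smult pderiv_mult d1' by (simp add: pderiv_pCons)
  also have "[:0, 2:] * smult (real (m + 1)) (?Q ^ m * [:0, 2:]) = smult (real (m + 1)) (?Q ^ m * ([:0, 2:] * [:0, 2:]))"
    by (simp only: mult_smult_right mult.left_commute)
  also have "\<dots> = smult (4 * real (m + 1)) (?Q ^ m * (?Q + 1))"
    unfolding sq by (simp add: algebra_simps)
  also have "?Q ^ (m + 1) * [:2:] = smult 2 (?Q ^ (m + 1))"
    by (simp add: mult.commute)
  also have "smult (real (m + 2)) (smult 2 (?Q ^ (m + 1)) + smult (4 * real (m + 1)) (?Q ^ m * (?Q + 1))) =
      smult (2 * real (m + 2) * (2 * real m + 3)) (?Q ^ (m + 1)) + smult (4 * real (m + 2) * real (m + 1)) (?Q ^ m)"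
    by (simp add: algebra_simps smult_add_right) (simp only: smult_add_left[symmetric], simp add: algebra_simps)
  finally show ?thesis .
qed

lemma pderiv_legendre_recurrence:
  "pderiv (jacobi_poly (m + 2) 0 0) = smult (2 * real m + 3) (jacobi_poly (m + 1) 0 0) + pderiv (jacobi_poly m 0 0)"
proof -
  define c :: real where "c = 2 ^ (m + 2) * fact (m + 2)"
  have "smult c (pderiv (jacobi_poly (m + 2) 0 0)) = pderiv (smult c (jacobi_poly (m + 2) 0 0))"
    by (simp add: pderiv_smult)
  also have "\<dots> = pderiv ((pderiv ^^ (m + 2)) (sq_minus_one ^ (m + 2)))"
    unfolding c_def by (simp only: rodrigues_formula_legendre)
  also have "\<dots> = (pderiv ^^ ((m + 1) + 2)) (sq_minus_one ^ (m + 2))"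
    by (simp del: funpow.simps add: funpow_Suc_right[symmetric]) (simp add: numeral_2_eq_2)
  also have "\<dots> = (pderiv ^^ (m + 1)) ((pderiv ^^ 2) (sq_minus_one ^ (m + 2)))"
    by (simp only: funpow_add o_apply)
  also have "\<dots> = smult (2 * real (m + 2) * (2 * real m + 3)) ((pderiv ^^ (m + 1)) (sq_minus_one ^ (m + 1)))
        + smult (4 * real (m + 2) * real (m + 1)) (pderiv ((pderiv ^^ m) (sq_minus_one ^ m)))"
    unfolding higher_pderiv_2_sq_minus_one_power higher_pderiv_add higher_pderiv_smult by simp
  also have "\<dots> = smult (2 * real (m + 2) * (2 * real m + 3)) (smult (2 ^ (m + 1) * fact (m + 1)) (jacobi_poly (m + 1) 0 0))
        + smult (4 * real (m + 2) * real (m + 1)) (pderiv (smult (2 ^ m * fact m) (jacobi_poly m 0 0)))"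
    by (simp only: rodrigues_formula_legendre)
  also have "\<dots> = smult c (smult (2 * real m + 3) (jacobi_poly (m + 1) 0 0) + pderiv (jacobi_poly m 0 0))"
    by (simp add: c_def pderiv_smult smult_add_right fact_Suc algebra_simps)
  finally show ?thesis
    by (rule smult_cancel[rotated]) (simp add: c_def)
qed

lemma legendre_minus_one: "legendre k (-1) = (-1) ^ k"
proof -
  have "legendre k (-1) = (\<Sum>s\<le>k. if s = k then (-1) ^ k else 0)"
    unfolding legendre_def jacobiP_def by (intro sum.cong refl) auto
  then show ?thesis
    by simp
qed

lemma intLegendre_eq_legendre_diff:
  assumes "-1 \<le> s"
  shows "intLegendre (m + 2) s = (legendre (m + 2) s - legendre m s) / (2 * real m + 3)"
proof -
  define P where "P = smult (1 / (2 * real m + 3)) (jacobi_poly (m + 2) 0 0 - jacobi_poly m 0 0)"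
  have "pderiv P = jacobi_poly (m + 1) 0 0"
    unfolding P_def pderiv_smult pderiv_diff pderiv_legendre_recurrence
    by (simp add: field_simps smult_add_right)
  then have "(legendre (m + 1) has_integral (poly P s - poly P (-1))) {-1..s}"
    using poly_has_integral_pderiv[OF assms, of P] by (simp add: legendre_eq_poly)
  moreover have "poly P (-1) = 0"
    using legendre_minus_one[of "m + 2"] legendre_minus_one[of m]
    by (simp add: P_def legendre_eq_poly)
  ultimately have "intLegendre (m + 2) s = poly P s"
    unfolding intLegendre_def by (simp add: integral_unique)
  then show ?thesis
    by (simp add: P_def legendre_eq_poly field_simps)
qed

lemma legendre_diff_sq_integral:
  "integral {-1..1} (\<lambda>u. (legendre (j + 2) u - legendre j u)\<^sup>2) \<le> 8"
  "0 \<le> integral {-1..1} (\<lambda>u. (legendre (j + 2) u - legendre j u)\<^sup>2)"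
proof -
  have int: "(\<lambda>u. (legendre k u)\<^sup>2) integrable_on {-1..1}" for k
    unfolding legendre_eq_poly by (intro integrable_continuous_interval continuous_intros)
  have "integral {-1..1} (\<lambda>u. (legendre (j + 2) u - legendre j u)\<^sup>2)
      \<le> integral {-1..1} (\<lambda>u. 2 * (legendre (j + 2) u)\<^sup>2 + 2 * (legendre j u)\<^sup>2)"
  proof (rule integral_le)
    show "(\<lambda>u. (legendre (j + 2) u - legendre j u)\<^sup>2) integrable_on {-1..1}"
      unfolding legendre_eq_poly by (intro integrable_continuous_interval continuous_intros)
    show "(\<lambda>u. 2 * (legendre (j + 2) u)\<^sup>2 + 2 * (legendre j u)\<^sup>2) integrable_on {-1..1}"
      using int by (intro integrable_add integrable_on_cmult_left) auto
    show "(legendre (j + 2) u - legendre j u)\<^sup>2 \<le> 2 * (legendre (j + 2) u)\<^sup>2 + 2 * (legendre j u)\<^sup>2" for u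
      by (smt (verit) zero_le_power2 power2_diff power2_sum)
  qed
  also have "\<dots> = 2 * integral {-1..1} (\<lambda>u. (legendre (j + 2) u)\<^sup>2) + 2 * integral {-1..1} (\<lambda>u. (legendre j u)\<^sup>2)"
    using int by (simp add: integral_add integrable_on_cmult_left)
  also have "\<dots> \<le> 8"
    using legendre_sq_integral_le[of "j + 2"] legendre_sq_integral_le[of j] by linarith
  finally show "integral {-1..1} (\<lambda>u. (legendre (j + 2) u - legendre j u)\<^sup>2) \<le> 8" .
  show "0 \<le> integral {-1..1} (\<lambda>u. (legendre (j + 2) u - legendre j u)\<^sup>2)"
    unfolding legendre_eq_poly by (intro integral_nonneg integrable_continuous_interval continuous_intros) simp
qed

section \<open>Integration over the reference triangle\<close>

lemma mem_Khat: "(x, y) \<in> Khat \<longleftrightarrow> 0 \<le> x \<and> 0 \<le> y \<and> x + y \<le> 1"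
proof -
  have "Khat = {u *\<^sub>R (0, 0) + v *\<^sub>R (1, 0) + w *\<^sub>R (0, 1) | u v w.
                0 \<le> u \<and> 0 \<le> v \<and> 0 \<le> w \<and> u + v + w = (1 :: real)}"
    unfolding Khat_def by (rule convex_hull_3)
  also have "\<dots> = {(x, y). 0 \<le> x \<and> 0 \<le> y \<and> x + y \<le> 1}"
  proof (intro set_eqI iffI)
    fix z
    assume "z \<in> {(x, y). 0 \<le> x \<and> 0 \<le> y \<and> x + y \<le> (1 :: real)}"
    then obtain x y where "z = (x, y)" "0 \<le> x" "0 \<le> y" "x + y \<le> 1"
      by auto
    then show "z \<in> {u *\<^sub>R (0, 0) + v *\<^sub>R (1, 0) + w *\<^sub>R (0, 1) | u v w.
                0 \<le> u \<and> 0 \<le> v \<and> 0 \<le> w \<and> u + v + w = (1 :: real)}"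
      by (intro CollectI exI[of _ "1 - x - y"] exI[of _ x] exI[of _ y]) auto
  qed auto
  finally show ?thesis
    by blast
qed

lemma compact_Khat: "compact Khat"
  unfolding Khat_def by (rule compact_convex_hull) simp

lemma integrable_on_Khat: "continuous_on Khat f \<Longrightarrow> (f :: pt \<Rightarrow> real) integrable_on Khat"
  using set_borel_integral_eq_integral(1)[of Khat f] borel_integrable_compact[OF compact_Khat, of f]
  unfolding set_integrable_def by simp

lemma Khat_lborel_pair:
  fixes f :: "pt \<Rightarrow> real"
  assumes "continuous_on Khat f"
  shows "integrable (lborel \<Otimes>\<^sub>M lborel) (\<lambda>z. indicator Khat z * f z)"
    and "integral Khat f = (\<integral>z. indicator Khat z * f z \<partial>(lborel \<Otimes>\<^sub>M lborel))"
  using borel_integrable_compact[OF compact_Khat assms]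
    set_borel_integral_eq_integral(2)[of Khat f]
  unfolding set_integrable_def set_lebesgue_integral_def lborel_prod by simp_all

lemma lborel_integral_Khat_slice:
  fixes g :: "pt \<Rightarrow> real"
  assumes g: "continuous_on Khat g"
  shows "(\<integral>x. indicator Khat (x, y) * g (x, y) \<partial>lborel) =
         indicator {0..1} y * integral {0..1 - y} (\<lambda>x. g (x, y))"
proof (cases "0 \<le> y \<and> y \<le> 1")
  case True
  then have "indicator Khat (x, y) = (indicator {0..1 - y} x :: real)" for x
    by (auto simp: indicator_def mem_Khat)
  moreover have "set_integrable lborel {0..1 - y} (\<lambda>x. g (x, y))"
    unfolding set_integrable_def
    by (intro borel_integrable_compact compact_Icc continuous_on_compose2[OF g])
       (use True in \<open>auto intro!: continuous_intros simp: mem_Khat\<close>)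
  then have "(LINT x:{0..1 - y}|lborel. g (x, y)) = integral {0..1 - y} (\<lambda>x. g (x, y))"
    by (rule set_borel_integral_eq_integral(2))
  ultimately show ?thesis
    using True by (simp add: set_lebesgue_integral_def)
next
  case False
  then have "indicator Khat (x, y) = (0 :: real)" for x
    by (auto simp: indicator_def mem_Khat)
  then show ?thesis
    using False by simp
qed

lemma integral_Khat_iterated:
  fixes g :: "pt \<Rightarrow> real"
  assumes g: "continuous_on Khat g"
  shows "integral Khat g = integral {0..1} (\<lambda>y. integral {0..1 - y} (\<lambda>x. g (x, y)))"
proof -
  define f where "f = (\<lambda>x y. indicator Khat (x, y) * g (x, y) :: real)"
  define h where "h = (\<lambda>y. integral {0..1 - y} (\<lambda>x. g (x, y)))"
  have int: "integrable (lborel \<Otimes>\<^sub>M lborel) (case_prod f)"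
    using Khat_lborel_pair(1)[OF g] by (simp add: f_def case_prod_unfold)
  have inner: "(\<integral>x. f x y \<partial>lborel) = indicator {0..1} y * h y" for y
    unfolding f_def h_def by (rule lborel_integral_Khat_slice[OF g])
  have "integral Khat g = integral\<^sup>L (lborel \<Otimes>\<^sub>M lborel) (case_prod f)"
    using Khat_lborel_pair(2)[OF g] by (simp add: f_def case_prod_unfold)
  also have "\<dots> = (\<integral>y. indicator {0..1} y * h y \<partial>lborel)"
    by (simp add: lborel_pair.integral_snd[OF int, symmetric] inner)
  also have "\<dots> = integral {0..1} h"
  proof -
    have "set_integrable lborel {0..1} h"
      using lborel_pair.integrable_snd[OF int] by (simp add: set_integrable_def inner)
    then show ?thesis
      by (simp add: set_borel_integral_eq_integral(2)[symmetric] set_lebesgue_integral_def)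
  qed
  finally show ?thesis
    unfolding h_def .
qed

lemma integral_Khat_swap:
  fixes g :: "pt \<Rightarrow> real"
  assumes g: "continuous_on Khat g"
  shows "integral Khat (\<lambda>z. g (snd z, fst z)) = integral Khat g"
proof -
  have swap_Khat: "(snd z, fst z) \<in> Khat \<longleftrightarrow> z \<in> Khat" for z
    by (cases z) (auto simp: mem_Khat)
  have g': "continuous_on Khat (\<lambda>z. g (snd z, fst z))"
    by (rule continuous_on_compose2[OF g]) (auto intro!: continuous_intros simp: mem_Khat)
  have meas: "(\<lambda>z. indicator Khat z * g z) \<in> borel_measurable (lborel \<Otimes>\<^sub>M lborel)"
    unfolding lborel_prod using borel_measurable_continuous_on_indicator[OF _ g] compact_Khat
    by (simp add: compact_imp_closed borel_closed)
  have "(\<integral>z. indicator Khat z * g z \<partial>(lborel \<Otimes>\<^sub>M lborel)) =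
        (\<integral>z. indicator Khat z * g z \<partial>distr (lborel \<Otimes>\<^sub>M lborel) (lborel \<Otimes>\<^sub>M lborel) (\<lambda>(x, y). (y, x)))"
    by (simp flip: lborel_pair.distr_pair_swap)
  also have "\<dots> = (\<integral>z. indicator Khat (snd z, fst z) * g (snd z, fst z) \<partial>(lborel \<Otimes>\<^sub>M lborel))"
    by (subst integral_distr) (auto simp: meas case_prod_unfold measurable_pair_swap')
  finally show ?thesis
    unfolding Khat_lborel_pair(2)[OF g] Khat_lborel_pair(2)[OF g']
    by (simp add: indicator_def swap_Khat)
qed

lemma integral_reflect_Icc:
  fixes f :: "real \<Rightarrow> real"
  shows "integral {0..c} (\<lambda>x. f (c - x)) = integral {0..c} f"
proof -
  have "integral {-c - -c..0 - -c} (\<lambda>x. f (- (x + -c))) = integral {-c..0} (\<lambda>x. f (-x))"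
    by (rule integral_shift_real_ivl)
  moreover have "integral {-c..0} (\<lambda>x. f (-x)) = integral {0..c} f"
    using Henstock_Kurzweil_Integration.integral_reflect_real[of c 0 f] by simp
  ultimately show ?thesis
    by simp
qed

lemma integral_Khat_reflect:
  fixes g :: "pt \<Rightarrow> real"
  assumes g: "continuous_on Khat g"
  shows "integral Khat (\<lambda>z. g (1 - fst z - snd z, snd z)) = integral Khat g"
proof -
  have g': "continuous_on Khat (\<lambda>z. g (1 - fst z - snd z, snd z))"
    by (rule continuous_on_compose2[OF g]) (auto intro!: continuous_intros simp: mem_Khat)
  have "integral {0..1 - y} (\<lambda>x. g (1 - x - y, y)) = integral {0..1 - y} (\<lambda>x. g (x, y))" for y
    using integral_reflect_Icc[of "1 - y" "\<lambda>x. g (x, y)"] by (simp add: algebra_simps)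
  then show ?thesis
    unfolding integral_Khat_iterated[OF g'] integral_Khat_iterated[OF g] by simp
qed

lemma integral_Icc_0_rescale:
  fixes F :: "real \<Rightarrow> real"
  assumes F: "continuous_on {0..L} F" and L: "0 \<le> L"
  shows "integral {0..L} F = L / 2 * integral {-1..1} (\<lambda>u. F (L / 2 * u + L / 2))"
proof (cases "L = 0")
  case True
  then show ?thesis by simp
next
  case False
  then have m: "L / 2 > 0"
    using L by simp
  have "(F has_integral integral {0..L} F) (cbox 0 L)"
    using integrable_continuous_interval[OF F] by (simp add: integrable_integral)
  then have "((\<lambda>x. F ((L / 2) *\<^sub>R x + L / 2)) has_integral (integral {0..L} F /\<^sub>R (L / 2) ^ DIM(real)))
         (cbox ((0 - L / 2) /\<^sub>R (L / 2)) ((L - L / 2) /\<^sub>R (L / 2)))"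
    using has_integral_affinity_iff[OF m, of F "L / 2" "integral {0..L} F" 0 L] by simp
  moreover have "cbox ((0 - L / 2) /\<^sub>R (L / 2)) ((L - L / 2) /\<^sub>R (L / 2)) = {-1..1 :: real}"
    using False by simp
  ultimately have "((\<lambda>u. F (L / 2 * u + L / 2)) has_integral (integral {0..L} F / (L / 2))) {-1..1}"
    by (simp add: mult.commute)
  then show ?thesis
    using m by (simp add: integral_unique field_simps)
qed

text \<open>The Duffy transformation: collapsing the horizontal slices of the triangle onto \<open>[-1, 1]\<close>.\<close>

lemma integral_Khat_duffy:
  fixes g :: "pt \<Rightarrow> real"
  assumes g: "continuous_on Khat g"
  shows "integral Khat g =
    integral {0..1} (\<lambda>y. (1 - y) / 2 * integral {-1..1} (\<lambda>u. g ((1 - y) / 2 * u + (1 - y) / 2, y)))"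
proof -
  have "integral {0..1 - y} (\<lambda>x. g (x, y)) =
      (1 - y) / 2 * integral {-1..1} (\<lambda>u. g ((1 - y) / 2 * u + (1 - y) / 2, y))"
    if y: "y \<in> {0..1}" for y
  proof (rule integral_Icc_0_rescale)
    show "continuous_on {0..1 - y} (\<lambda>x. g (x, y))"
      by (rule continuous_on_compose2[OF g]) (use y in \<open>auto intro!: continuous_intros simp: mem_Khat\<close>)
  qed (use y in auto)
  then show ?thesis
    unfolding integral_Khat_iterated[OF g] by (intro integral_cong) auto
qed

lemma integral_one_minus_power: "integral {0..1} (\<lambda>y::real. (1 - y) ^ k) = 1 / (real k + 1)"
proof -
  have "((\<lambda>y::real. y ^ Suc k / (real k + 1)) has_real_derivative y ^ k) (at y within {0..1})" for y :: real
    using DERIV_cdivide[OF DERIV_pow[of "Suc k"], of "real k + 1"] by (simp add: add.commute)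
  then have "((\<lambda>y::real. y ^ k) has_integral (1 / (real k + 1))) {0..1}"
    using fundamental_theorem_of_calculus[of 0 1 "\<lambda>y. y ^ Suc k / (real k + 1)" "\<lambda>y. y ^ k"]
    by (simp add: has_real_derivative_iff_has_vector_derivative[symmetric])
  then show ?thesis
    using integral_reflect_Icc[of 1 "\<lambda>y. y ^ k"] by (simp add: integral_unique)
qed

lemma integral_Khat_1: "integral Khat (\<lambda>x. 1 :: real) = 1 / 2"
proof -
  have "integral Khat (\<lambda>x. 1 :: real) = integral {0..1} (\<lambda>y::real. (1 - y) ^ 1)"
    unfolding integral_Khat_iterated[OF continuous_on_const] by (intro integral_cong) simp
  then show ?thesis
    using integral_one_minus_power[of 1] by simp
qed

section \<open>Homogenized Jacobi polynomials\<close>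

text \<open>A polynomial version of \<^const>\<open>jacobiS\<close>, which avoids the division by \<open>t\<close>.\<close>

definition jacobi_hom :: "nat \<Rightarrow> nat \<Rightarrow> nat \<Rightarrow> real \<Rightarrow> real \<Rightarrow> real" where
  "jacobi_hom n a b s t = (\<Sum>k\<le>n. real ((n + a) choose (n - k)) * real ((n + b) choose k)
       * ((s - t) / 2) ^ k * ((s + t) / 2) ^ (n - k))"

lemma jacobi_hom_scale: "jacobi_hom n a b (t * u) t = t ^ n * jacobiP n a b u"
  unfolding jacobi_hom_def jacobiP_def sum_distrib_left
proof (intro sum.cong refl)
  fix k
  assume "k \<in> {..n}"
  then have tn: "t ^ n = t ^ k * t ^ (n - k)"
    by (simp add: power_add[symmetric])
  have e1: "(t * u - t) / 2 = t * ((u - 1) / 2)" and e2: "(t * u + t) / 2 = t * ((u + 1) / 2)"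
    by (simp_all add: algebra_simps)
  show "real ((n + a) choose (n - k)) * real ((n + b) choose k) * ((t * u - t) / 2) ^ k *
        ((t * u + t) / 2) ^ (n - k) =
      t ^ n * (real ((n + a) choose (n - k)) * real ((n + b) choose k) * ((u - 1) / 2) ^ k *
        ((u + 1) / 2) ^ (n - k))"
    unfolding e1 e2 tn power_mult_distrib by (simp add: mult_ac)
qed

lemma jacobiS_eq_jacobi_hom:
  assumes "t \<noteq> 0 \<or> s = 0"
  shows "jacobiS n a b s t = jacobi_hom n a b s t"
  using assms jacobi_hom_scale[of n a b t "s / t"] jacobi_hom_scale[of n a b 0 0]
  by (cases "t = 0") (auto simp: jacobiS_def)

lemma continuous_on_jacobi_hom [continuous_intros]:
  "continuous_on S f \<Longrightarrow> continuous_on S g \<Longrightarrow> continuous_on S (\<lambda>z. jacobi_hom n a b (f z) (g z))"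
  unfolding jacobi_hom_def by (auto intro!: continuous_intros)

definition legendre_diff_hom :: "nat \<Rightarrow> real \<Rightarrow> real \<Rightarrow> real" where
  "legendre_diff_hom m s t = jacobi_hom (m + 2) 0 0 s t - t\<^sup>2 * jacobi_hom m 0 0 s t"

lemma legendre_diff_hom_scale:
  "legendre_diff_hom m (t * u) t = t ^ (m + 2) * (legendre (m + 2) u - legendre m u)"
  unfolding legendre_diff_hom_def jacobi_hom_scale legendre_def
  by (simp add: algebra_simps power_add power2_eq_square)

lemma continuous_on_legendre_diff_hom [continuous_intros]:
  "continuous_on S f \<Longrightarrow> continuous_on S g \<Longrightarrow> continuous_on S (\<lambda>z. legendre_diff_hom m (f z) (g z))"
  unfolding legendre_diff_hom_def by (intro continuous_intros)

lemma intLegendreS_eq_legendre_diff_hom: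
  assumes "(0 < t \<and> -t \<le> s) \<or> (t = 0 \<and> s = 0)"
  shows "intLegendreS (m + 2) s t = legendre_diff_hom m s t / (2 * real m + 3)"
proof (cases "t = 0")
  case True
  then show ?thesis
    using assms legendre_diff_hom_scale[of m 0 0] by (simp add: intLegendreS_def)
next
  case False
  then have t: "0 < t" "-1 \<le> s / t"
    using assms by (auto simp: field_simps)
  then have "intLegendreS (m + 2) s t =
      t ^ (m + 2) * (legendre (m + 2) (s / t) - legendre m (s / t)) / (2 * real m + 3)"
    using intLegendre_eq_legendre_diff[OF t(2), of m] by (simp add: intLegendreS_def)
  also have "\<dots> = legendre_diff_hom m (t * (s / t)) t / (2 * real m + 3)"
    unfolding legendre_diff_hom_scale ..
  finally show ?thesis
    using t by simp
qed

section \<open>Edge functions\<close>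

lemma bary_nonneg: "z \<in> Khat \<Longrightarrow> 0 \<le> bary i z"
  by (cases z) (auto simp: bary_def mem_Khat)

lemma continuous_on_bary [continuous_intros]: "continuous_on S (bary i)"
proof -
  have "bary i = (\<lambda>x. 1 - fst x - snd x) \<or> bary i = fst \<or> bary i = snd"
    by (auto simp: bary_def fun_eq_iff)
  then show ?thesis
    by (auto intro!: continuous_intros)
qed

definition edge_fn_poly :: "nat \<Rightarrow> nat \<Rightarrow> pt \<Rightarrow> real" where
  "edge_fn_poly m j z = sqrt ((2 * real j + 3) / 2) / (2 * real j + 3) *
      legendre_diff_hom j (bary (edge_e2 m) z - bary (edge_e1 m) z) (bary (edge_e1 m) z + bary (edge_e2 m) z)"

lemma edge_fn_eq_edge_fn_poly: "z \<in> Khat \<Longrightarrow> edge_fn m j z = edge_fn_poly m j z"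
  unfolding edge_fn_def edge_fn_poly_def
  using intLegendreS_eq_legendre_diff_hom[of "bary (edge_e1 m) z + bary (edge_e2 m) z"
      "bary (edge_e2 m) z - bary (edge_e1 m) z" j]
    bary_nonneg[of z "edge_e1 m"] bary_nonneg[of z "edge_e2 m"]
  by fastforce

lemma continuous_on_edge_fn_poly [continuous_intros]: "continuous_on S (edge_fn_poly m j)"
  unfolding edge_fn_poly_def by (intro continuous_intros)

text \<open>The three edges are exchanged by the symmetries of the triangle, so every edge integral
  reduces to one for the third edge.\<close>

lemma integral_Khat_edge_coordinates:
  fixes G :: "real \<times> real \<Rightarrow> real"
  assumes G: "continuous_on UNIV G"
  shows "integral Khat (\<lambda>z. G (bary (edge_e2 m) z - bary (edge_e1 m) z, bary (edge_e1 m) z + bary (edge_e2 m) z))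
       = integral Khat (\<lambda>z. G (2 * fst z + snd z - 1, 1 - snd z))"
proof -
  have cont: "continuous_on Khat (\<lambda>z. G (f z))" if "continuous_on UNIV f" for f :: "pt \<Rightarrow> real \<times> real"
    by (rule continuous_on_compose2[OF G]) (auto intro: continuous_on_subset[OF that])
  consider "m = 1" | "m = 2" | "m \<noteq> 1 \<and> m \<noteq> 2"
    by blast
  then show ?thesis
  proof cases
    case 1
    have "integral Khat (\<lambda>z. G (snd z - fst z, fst z + snd z)) =
        integral Khat (\<lambda>z. G (fst z + 2 * snd z - 1, 1 - fst z))"
      using integral_Khat_reflect[OF cont, of "\<lambda>z. (snd z - fst z, fst z + snd z)"]
      by (simp add: algebra_simps continuous_intros)
    also have "\<dots> = integral Khat (\<lambda>z. G (2 * fst z + snd z - 1, 1 - snd z))"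
      using integral_Khat_swap[OF cont, of "\<lambda>z. (fst z + 2 * snd z - 1, 1 - fst z)"]
      by (simp add: algebra_simps continuous_intros)
    finally show ?thesis
      using 1 by (simp add: bary_def edge_e1_def edge_e2_def algebra_simps)
  next
    case 2
    have "integral Khat (\<lambda>z. G (1 - 2 * snd z - fst z, 1 - fst z)) =
        integral Khat (\<lambda>z. G (1 - 2 * fst z - snd z, 1 - snd z))"
      using integral_Khat_swap[OF cont, of "\<lambda>z. (1 - 2 * fst z - snd z, 1 - snd z)"]
      by (simp add: continuous_intros)
    also have "\<dots> = integral Khat (\<lambda>z. G (2 * fst z + snd z - 1, 1 - snd z))"
      using integral_Khat_reflect[OF cont, of "\<lambda>z. (2 * fst z + snd z - 1, 1 - snd z)"]
      by (simp add: algebra_simps continuous_intros)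
    finally show ?thesis
      using 2 by (simp add: bary_def edge_e1_def edge_e2_def algebra_simps)
  next
    case 3
    then show ?thesis
      by (intro integral_cong) (auto simp: bary_def edge_e1_def edge_e2_def algebra_simps)
  qed
qed

lemma integral_Khat_edge_3_duffy:
  fixes G :: "real \<times> real \<Rightarrow> real"
  assumes G: "continuous_on UNIV G"
  shows "integral Khat (\<lambda>z. G (2 * fst z + snd z - 1, 1 - snd z))
       = integral {0..1} (\<lambda>y. (1 - y) / 2 * integral {-1..1} (\<lambda>u. G ((1 - y) * u, 1 - y)))"
proof -
  have cont: "continuous_on Khat (\<lambda>z::pt. G (2 * fst z + snd z - 1, 1 - snd z))"
    by (rule continuous_on_compose2[OF G]) (auto intro!: continuous_intros)
  have e: "2 * ((1 - y) / 2 * u + (1 - y) / 2) + y - 1 = (1 - y) * u" for y u :: real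
    by (simp add: field_simps)
  show ?thesis
    unfolding integral_Khat_duffy[OF cont] fst_conv snd_conv e ..
qed

lemma integral_Khat_edge_fn_poly_sq:
  "integral Khat (\<lambda>z. (edge_fn_poly m j z)\<^sup>2) =
     integral {-1..1} (\<lambda>u. (legendre (j + 2) u - legendre j u)\<^sup>2) / (4 * (2 * real j + 3) * (2 * real j + 6))"
proof -
  define c where "c = sqrt ((2 * real j + 3) / 2) / (2 * real j + 3)"
  define N where "N = integral {-1..1} (\<lambda>u. (legendre (j + 2) u - legendre j u)\<^sup>2)"
  define G where "G = (\<lambda>p::real \<times> real. c\<^sup>2 * (legendre_diff_hom j (fst p) (snd p))\<^sup>2)"
  have c2: "c\<^sup>2 = 1 / (2 * (2 * real j + 3))"
    unfolding c_def by (simp add: power_divide power2_eq_square)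
  have G: "continuous_on UNIV G"
    unfolding G_def by (intro continuous_intros)
  have inner: "integral {-1..1} (\<lambda>u. G ((1 - y) * u, 1 - y)) = c\<^sup>2 * (1 - y) ^ (2 * j + 4) * N" for y
  proof -
    have "(1 - y) ^ (2 * j + 4) = ((1 - y) ^ (j + 2))\<^sup>2"
      by (metis power_mult mult.commute add_mult_distrib mult_2_right numeral_Bit0)
    then have "G ((1 - y) * u, 1 - y) = c\<^sup>2 * (1 - y) ^ (2 * j + 4) * (legendre (j + 2) u - legendre j u)\<^sup>2" for u
      by (simp only: G_def fst_conv snd_conv legendre_diff_hom_scale power_mult_distrib mult.assoc)
    then show ?thesis
      by (simp add: N_def)
  qed
  have "integral Khat (\<lambda>z. (edge_fn_poly m j z)\<^sup>2) =
        integral Khat (\<lambda>z. G (bary (edge_e2 m) z - bary (edge_e1 m) z, bary (edge_e1 m) z + bary (edge_e2 m) z))"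
    unfolding G_def edge_fn_poly_def c_def by (intro integral_cong) (simp add: power_mult_distrib power_divide)
  also have "\<dots> = integral {0..1} (\<lambda>y. c\<^sup>2 * N / 2 * (1 - y) ^ (2 * j + 5))"
  proof -
    have "2 * j + 5 = Suc (2 * j + 4)"
      by simp
    then have "(1 - y) ^ (2 * j + 5) = (1 - y) * (1 - y) ^ (2 * j + 4)" for y :: real
      by (simp only: power_Suc)
    then show ?thesis
      unfolding integral_Khat_edge_coordinates[OF G] integral_Khat_edge_3_duffy[OF G] inner
      by (intro integral_cong) (simp add: mult_ac)
  qed
  also have "\<dots> = c\<^sup>2 * N / 2 / (2 * real j + 6)"
    by (simp add: integral_one_minus_power)
  finally show ?thesis
    unfolding c2 N_def by (simp add: field_simps)
qed

lemma integral_Khat_edge_fn_poly_sq_le: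
  "integral Khat (\<lambda>z. (edge_fn_poly m j z)\<^sup>2) \<le> 1 / ((real j + 1) * (real j + 2))"
proof -
  have "integral Khat (\<lambda>z. (edge_fn_poly m j z)\<^sup>2) \<le> 8 / (4 * (2 * real j + 3) * (2 * real j + 6))"
    unfolding integral_Khat_edge_fn_poly_sq using legendre_diff_sq_integral[of j]
    by (intro divide_right_mono) auto
  also have "\<dots> = 1 / ((2 * real j + 3) * (real j + 3))"
  proof -
    have "4 * (2 * real j + 3) * (2 * real j + 6) = 8 * ((2 * real j + 3) * (real j + 3))"
      by (simp add: algebra_simps)
    then show ?thesis
      by simp
  qed
  also have "\<dots> \<le> 1 / ((real j + 1) * (real j + 2))"
    by (intro frac_le mult_mono) auto
  finally show ?thesis .
qed

lemma sum_inverse_consecutive_products: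
  "(\<Sum>j<n. 1 / ((real j + 1) * (real j + 2))) = 1 - 1 / (real n + 1)"
proof (induction n)
  case (Suc n)
  have "1 / ((real n + 1) * (real n + 2)) = 1 / (real n + 1) - 1 / (real n + 2)"
    by (simp add: field_simps)
  with Suc.IH show ?case
    by simp
qed simp

lemma finite_edge_idx: "finite (edge_idx p)"
  by (rule finite_subset[of _ "{..<p}"]) (auto simp: edge_idx_def)

lemma continuous_on_edge_sum: "continuous_on Khat (\<lambda>x. \<Sum>j\<in>edge_idx p. a j * edge_fn m j x)"
proof -
  have "continuous_on Khat (\<lambda>x. \<Sum>j\<in>edge_idx p. a j * edge_fn_poly m j x)"
    by (intro continuous_intros)
  then show ?thesis
    by (rule continuous_on_cong[THEN iffD1, rotated 2]) (auto simp: edge_fn_eq_edge_fn_poly)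
qed

text \<open>By Cauchy--Schwarz the bound reduces to
  \<open>\<Sum>_j \<parallel>\<phi>_j\<parallel>^2 \<le> \<Sum>_j 1 / ((j + 1)(j + 2)) \<le> 1\<close>.\<close>

lemma L2sq_edge_sum_le:
  "L2sq (\<lambda>x. \<Sum>j\<in>edge_idx p. a j * edge_fn m j x) \<le> (\<Sum>j\<in>edge_idx p. (a j)\<^sup>2)"
proof -
  define E where "E = edge_idx p"
  define S where "S = (\<Sum>j\<in>E. (a j)\<^sup>2)"
  have S: "0 \<le> S"
    unfolding S_def by (intro sum_nonneg) simp
  have "L2sq (\<lambda>x. \<Sum>j\<in>E. a j * edge_fn m j x) = integral Khat (\<lambda>x. (\<Sum>j\<in>E. a j * edge_fn_poly m j x)\<^sup>2)"
    unfolding L2sq_def by (intro integral_cong) (simp add: edge_fn_eq_edge_fn_poly)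
  also have "\<dots> \<le> integral Khat (\<lambda>x. S * (\<Sum>j\<in>E. (edge_fn_poly m j x)\<^sup>2))"
    unfolding S_def
    by (intro integral_le integrable_on_Khat Cauchy_Schwarz_ineq_sum continuous_intros)
  also have "\<dots> = S * (\<Sum>j\<in>E. integral Khat (\<lambda>x. (edge_fn_poly m j x)\<^sup>2))"
    by (simp add: E_def finite_edge_idx integrable_on_Khat continuous_intros integral_sum)
  also have "\<dots> \<le> S * (\<Sum>j<p. 1 / ((real j + 1) * (real j + 2)))"
  proof (intro mult_left_mono S order.trans[OF sum_mono sum_mono2])
    show "integral Khat (\<lambda>x. (edge_fn_poly m j x)\<^sup>2) \<le> 1 / ((real j + 1) * (real j + 2))" for j
      by (rule integral_Khat_edge_fn_poly_sq_le)
  qed (auto simp: E_def edge_idx_def)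
  also have "\<dots> \<le> S"
    using S by (simp add: sum_inverse_consecutive_products mult_left_le)
  finally show ?thesis
    unfolding S_def E_def .
qed

section \<open>Cell functions\<close>

definition cell_fn_poly :: "nat \<Rightarrow> nat \<Rightarrow> pt \<Rightarrow> real" where
  "cell_fn_poly i j z = bary 1 z * bary 2 z * bary 3 z *
     jacobi_hom i 2 2 (bary 1 z - bary 2 z) (bary 1 z + bary 2 z) *
     jacobiP j (2 * i + 5) 2 (2 * bary 3 z - 1)"

lemma cell_fn_raw_eq_cell_fn_poly: "z \<in> Khat \<Longrightarrow> cell_fn_raw i j z = cell_fn_poly i j z"
  using bary_nonneg[of z 1] bary_nonneg[of z 2]
  by (simp add: cell_fn_raw_def cell_fn_poly_def jacobiS_eq_jacobi_hom)

lemma continuous_on_cell_fn_poly [continuous_intros]: "continuous_on S (cell_fn_poly i j)"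
  unfolding cell_fn_poly_def jacobiP_def by (auto intro!: continuous_intros)

lemma cell_fn_poly_duffy:
  "cell_fn_poly i j ((1 - y) / 2 * u + (1 - y) / 2, y) =
   ((1 - y) / 2)\<^sup>2 * ((1 - u) * (1 + u)) * y * (1 - y) ^ i * jacobiP i 2 2 (-u) * jacobiP j (2 * i + 5) 2 (2 * y - 1)"
proof -
  define z where "z = ((1 - y) / 2 * u + (1 - y) / 2, y)"
  have b1: "bary 1 z = (1 - y) / 2 * (1 - u)" and b2: "bary 2 z = (1 - y) / 2 * (1 + u)"
    and b3: "bary 3 z = y"
    unfolding z_def bary_def by (simp_all add: field_simps)
  have d: "bary 1 z - bary 2 z = (1 - y) * (-u)" and s: "bary 1 z + bary 2 z = 1 - y"
    unfolding b1 b2 by (simp_all add: field_simps)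
  have "cell_fn_poly i j z =
      bary 1 z * bary 2 z * bary 3 z * ((1 - y) ^ i * jacobiP i 2 2 (-u)) * jacobiP j (2 * i + 5) 2 (2 * y - 1)"
    unfolding cell_fn_poly_def d s jacobi_hom_scale b3 ..
  then show ?thesis
    unfolding z_def[symmetric] b1 b2 b3 by (simp add: power2_eq_square mult_ac)
qed

definition cell_gram_u :: "nat \<Rightarrow> nat \<Rightarrow> real" where
  "cell_gram_u i k = integral {-1..1} (\<lambda>v. (1 - v)\<^sup>2 * (1 + v)\<^sup>2 * jacobiP i 2 2 v * jacobiP k 2 2 v)"

definition cell_gram_y :: "nat \<Rightarrow> nat \<Rightarrow> nat \<Rightarrow> nat \<Rightarrow> real" where
  "cell_gram_y i k j l = integral {-1..1}
     (\<lambda>z. (1 - z) ^ (i + k + 5) * (1 + z)\<^sup>2 * jacobiP j (2 * i + 5) 2 z * jacobiP l (2 * k + 5) 2 z)"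

lemma cell_gram_u_reflect:
  "integral {-1..1} (\<lambda>u. (1 - u)\<^sup>2 * (1 + u)\<^sup>2 * jacobiP i 2 2 (-u) * jacobiP k 2 2 (-u)) = cell_gram_u i k"
proof -
  define g where "g = (\<lambda>v::real. (1 - v)\<^sup>2 * (1 + v)\<^sup>2 * jacobiP i 2 2 v * jacobiP k 2 2 v)"
  have "integral {-1..-(-1)} (\<lambda>x. g (-x)) = integral {-1..1} g"
    by (rule Henstock_Kurzweil_Integration.integral_reflect_real)
  moreover have "(\<lambda>x. g (-x)) = (\<lambda>u. (1 - u)\<^sup>2 * (1 + u)\<^sup>2 * jacobiP i 2 2 (-u) * jacobiP k 2 2 (-u))"
    unfolding g_def by (simp add: mult_ac)
  ultimately show ?thesis
    unfolding cell_gram_u_def g_def by simp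
qed

lemma integral_01_eq_pm1:
  fixes f :: "real \<Rightarrow> real"
  assumes "continuous_on UNIV f"
  shows "integral {0..1} (\<lambda>y. (1 - y) ^ r * y\<^sup>2 * f (2 * y - 1)) =
         integral {-1..1} (\<lambda>z. (1 - z) ^ r * (1 + z)\<^sup>2 * f z) / 2 ^ (r + 3)"
proof -
  have "continuous_on {0..1} (\<lambda>y. (1 - y) ^ r * y\<^sup>2 * f (2 * y - 1))"
    by (intro continuous_intros continuous_on_compose2[OF assms]) auto
  then have "integral {0..1} (\<lambda>y. (1 - y) ^ r * y\<^sup>2 * f (2 * y - 1)) =
      1 / 2 * integral {-1..1} (\<lambda>z. (1 - (z / 2 + 1 / 2)) ^ r * (z / 2 + 1 / 2)\<^sup>2 * f (2 * (z / 2 + 1 / 2) - 1))"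
    using integral_Icc_0_rescale[of 1] by simp
  also have "(\<lambda>z. (1 - (z / 2 + 1 / 2)) ^ r * (z / 2 + 1 / 2)\<^sup>2 * f (2 * (z / 2 + 1 / 2) - 1)) =
      (\<lambda>z. (1 - z) ^ r * (1 + z)\<^sup>2 * f z / 2 ^ (r + 2))"
  proof
    fix z :: real
    have "1 - (z / 2 + 1 / 2) = (1 - z) / 2" "z / 2 + 1 / 2 = (1 + z) / 2" "2 * (z / 2 + 1 / 2) - 1 = z"
      by (simp_all add: field_simps)
    then show "(1 - (z / 2 + 1 / 2)) ^ r * (z / 2 + 1 / 2)\<^sup>2 * f (2 * (z / 2 + 1 / 2) - 1) =
        (1 - z) ^ r * (1 + z)\<^sup>2 * f z / 2 ^ (r + 2)"
      by (simp add: power_divide power_add field_simps)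
  qed
  finally show ?thesis
    by (simp add: power_add)
qed

text \<open>In Duffy coordinates each cell function is a product of a function of \<open>u\<close> and one of \<open>y\<close>,
  so their \<open>L\<^sup>2\<close> products factor into two one-dimensional Jacobi integrals.\<close>

lemma integral_Khat_cell_fn_poly_mult:
  "integral Khat (\<lambda>z. cell_fn_poly i j z * cell_fn_poly k l z) =
   cell_gram_u i k * cell_gram_y i k j l / 2 ^ (i + k + 13)"
proof -
  have cont: "continuous_on Khat (\<lambda>z. cell_fn_poly i j z * cell_fn_poly k l z)"
    by (intro continuous_intros)
  define C where "C = (\<lambda>y::real. ((1 - y) / 2)\<^sup>2 * ((1 - y) / 2)\<^sup>2 * y\<^sup>2 * (1 - y) ^ (i + k) *
      jacobiP j (2 * i + 5) 2 (2 * y - 1) * jacobiP l (2 * k + 5) 2 (2 * y - 1))"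
  have inner: "integral {-1..1} (\<lambda>u. cell_fn_poly i j ((1 - y) / 2 * u + (1 - y) / 2, y) *
      cell_fn_poly k l ((1 - y) / 2 * u + (1 - y) / 2, y)) = C y * cell_gram_u i k" for y
  proof -
    have "(\<lambda>u. cell_fn_poly i j ((1 - y) / 2 * u + (1 - y) / 2, y) * cell_fn_poly k l ((1 - y) / 2 * u + (1 - y) / 2, y))
        = (\<lambda>u. C y * ((1 - u)\<^sup>2 * (1 + u)\<^sup>2 * jacobiP i 2 2 (-u) * jacobiP k 2 2 (-u)))"
      unfolding cell_fn_poly_duffy C_def by (rule ext) (simp add: power2_eq_square power_add mult_ac)
    then show ?thesis
      using cell_gram_u_reflect[of i k] by simp
  qed
  have "integral Khat (\<lambda>z. cell_fn_poly i j z * cell_fn_poly k l z) =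
      integral {0..1} (\<lambda>y. (1 - y) / 2 * (C y * cell_gram_u i k))"
    unfolding integral_Khat_duffy[OF cont] inner ..
  also have "\<dots> = cell_gram_u i k / 32 * integral {0..1} (\<lambda>y. (1 - y) ^ (i + k + 5) * y\<^sup>2 *
      (jacobiP j (2 * i + 5) 2 (2 * y - 1) * jacobiP l (2 * k + 5) 2 (2 * y - 1)))"
    unfolding C_def integral_mult_right[symmetric]
    by (intro integral_cong) (simp add: power_add power_divide field_simps eval_nat_numeral)
  also have "\<dots> = cell_gram_u i k * cell_gram_y i k j l / 2 ^ (i + k + 13)"
    by (subst integral_01_eq_pm1[where f="\<lambda>z. jacobiP j (2 * i + 5) 2 z * jacobiP l (2 * k + 5) 2 z"])
       (auto simp: jacobiP_def cell_gram_y_def power_add mult_ac intro!: continuous_intros)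
  finally show ?thesis .
qed

lemma cell_gram_u_eq_0:
  assumes "i \<noteq> k"
  shows "cell_gram_u i k = 0"
proof -
  have "cell_gram_u i k = 0" if "k < i" for i k
    using jacobiP_orthogonal[of "jacobi_poly k 2 2" i 2 2] degree_jacobi_poly_le[of k 2 2] that
    unfolding cell_gram_u_def by simp
  moreover have "cell_gram_u i k = cell_gram_u k i"
    unfolding cell_gram_u_def by (simp add: mult_ac)
  ultimately show ?thesis
    using assms by (metis linorder_neqE_nat)
qed

lemma cell_gram_y_eq_0:
  assumes "j \<noteq> l"
  shows "cell_gram_y i i j l = 0"
proof -
  have e: "i + i + 5 = 2 * i + 5"
    by simp
  have "cell_gram_y i i j l = 0" if "l < j" for j l
    using jacobiP_orthogonal[of "jacobi_poly l (2 * i + 5) 2" j "2 * i + 5" 2]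
      degree_jacobi_poly_le[of l "2 * i + 5" 2] that
    unfolding cell_gram_y_def e by simp
  moreover have "cell_gram_y i i j l = cell_gram_y i i l j"
    unfolding cell_gram_y_def by (simp add: mult_ac)
  ultimately show ?thesis
    using assms by (metis linorder_neqE_nat)
qed

lemma cell_fn_poly_orthogonal:
  "(i, j) \<noteq> (k, l) \<Longrightarrow> integral Khat (\<lambda>z. cell_fn_poly i j z * cell_fn_poly k l z) = 0"
  unfolding integral_Khat_cell_fn_poly_mult by (cases "i = k") (auto simp: cell_gram_u_eq_0 cell_gram_y_eq_0)

lemma L2sq_cell_fn_raw_pos: "0 < L2sq (cell_fn_raw i j)"
proof -
  have e: "i + i + 5 = 2 * i + 5"
    by simp
  have "0 < cell_gram_u i i"
    using jacobiP_weighted_norm_pos[of 2 2 i] unfolding cell_gram_u_def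
    by (simp add: power2_eq_square mult_ac)
  moreover have "0 < cell_gram_y i i j j"
    using jacobiP_weighted_norm_pos[of "2 * i + 5" 2 j] unfolding cell_gram_y_def e
    by (simp add: power2_eq_square mult_ac)
  moreover have "L2sq (cell_fn_raw i j) = integral Khat (\<lambda>z. cell_fn_poly i j z * cell_fn_poly i j z)"
    unfolding L2sq_def by (intro integral_cong) (simp add: cell_fn_raw_eq_cell_fn_poly power2_eq_square)
  ultimately show ?thesis
    unfolding integral_Khat_cell_fn_poly_mult by simp
qed

lemma integral_square_sum:
  fixes F :: "'i \<Rightarrow> 'a::euclidean_space \<Rightarrow> real"
  assumes I: "finite I" and F: "\<And>a b. a \<in> I \<Longrightarrow> b \<in> I \<Longrightarrow> (\<lambda>x. F a x * F b x) integrable_on S"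
  shows "integral S (\<lambda>x. (\<Sum>a\<in>I. w a * F a x)\<^sup>2) =
         (\<Sum>a\<in>I. \<Sum>b\<in>I. w a * w b * integral S (\<lambda>x. F a x * F b x))"
proof -
  have int: "(\<lambda>x. w a * w b * (F a x * F b x)) integrable_on S" if "a \<in> I" "b \<in> I" for a b
    using integrable_on_cmult_left[OF F[OF that], of "w a * w b"] by simp
  have "(\<Sum>a\<in>I. w a * F a x)\<^sup>2 = (\<Sum>a\<in>I. \<Sum>b\<in>I. w a * w b * (F a x * F b x))" for x
    by (simp add: power2_eq_square sum_product mult_ac)
  then have "integral S (\<lambda>x. (\<Sum>a\<in>I. w a * F a x)\<^sup>2) =
      (\<Sum>a\<in>I. integral S (\<lambda>x. \<Sum>b\<in>I. w a * w b * (F a x * F b x)))"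
    using I int by (simp add: integral_sum integrable_sum)
  also have "\<dots> = (\<Sum>a\<in>I. \<Sum>b\<in>I. integral S (\<lambda>x. w a * w b * (F a x * F b x)))"
    using I int by (intro sum.cong refl integral_sum) auto
  finally show ?thesis
    by simp
qed

lemma finite_cell_idx: "finite (cell_idx p)"
  by (rule finite_subset[of _ "{..p} \<times> {..p}"]) (auto simp: cell_idx_def)

lemma continuous_on_cell_sum: "continuous_on Khat (\<lambda>x. \<Sum>(i, j)\<in>cell_idx p. a (i, j) * cell_fn i j x)"
proof -
  have "continuous_on Khat (\<lambda>x. \<Sum>c\<in>cell_idx p. (a c * cell_const (fst c) (snd c)) * cell_fn_poly (fst c) (snd c) x)"
    by (intro continuous_intros)
  then show ?thesis
    by (rule continuous_on_cong[THEN iffD1, rotated 2])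
       (auto intro!: sum.cong simp: case_prod_beta cell_fn_def cell_fn_raw_eq_cell_fn_poly)
qed

lemma L2sq_cell_sum:
  "L2sq (\<lambda>x. \<Sum>(i, j)\<in>cell_idx p. a (i, j) * cell_fn i j x) = (\<Sum>c\<in>cell_idx p. \<bar>a c\<bar>\<^sup>2)"
proof -
  define w where "w = (\<lambda>c. a c * cell_const (fst c) (snd c))"
  define F where "F = (\<lambda>c. cell_fn_poly (fst c) (snd c))"
  have "L2sq (\<lambda>x. \<Sum>(i, j)\<in>cell_idx p. a (i, j) * cell_fn i j x) =
      integral Khat (\<lambda>x. (\<Sum>c\<in>cell_idx p. w c * F c x)\<^sup>2)"
    unfolding L2sq_def
    by (intro integral_cong arg_cong[where f="\<lambda>t. t\<^sup>2"] sum.cong refl)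
       (auto simp: case_prod_beta cell_fn_def cell_fn_raw_eq_cell_fn_poly F_def w_def)
  also have "\<dots> = (\<Sum>c\<in>cell_idx p. \<Sum>d\<in>cell_idx p. w c * w d * integral Khat (\<lambda>x. F c x * F d x))"
    by (intro integral_square_sum finite_cell_idx integrable_on_Khat) (simp add: F_def continuous_intros)
  also have "\<dots> = (\<Sum>c\<in>cell_idx p. (w c)\<^sup>2 * L2sq (cell_fn_raw (fst c) (snd c)))"
  proof (intro sum.cong refl)
    fix c
    assume c: "c \<in> cell_idx p"
    have "integral Khat (\<lambda>x. F c x * F d x) = 0" if "d \<noteq> c" for d
      unfolding F_def by (rule cell_fn_poly_orthogonal) (use that in \<open>auto simp: prod_eq_iff\<close>)
    then have "(\<Sum>d\<in>cell_idx p. w c * w d * integral Khat (\<lambda>x. F c x * F d x)) =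
        w c * w c * integral Khat (\<lambda>x. F c x * F c x)"
      using c by (subst sum.mono_neutral_right[OF finite_cell_idx, of "{c}"]) auto
    also have "integral Khat (\<lambda>x. F c x * F c x) = L2sq (cell_fn_raw (fst c) (snd c))"
      unfolding L2sq_def F_def by (intro integral_cong) (simp add: cell_fn_raw_eq_cell_fn_poly power2_eq_square)
    finally show "(\<Sum>d\<in>cell_idx p. w c * w d * integral Khat (\<lambda>x. F c x * F d x)) =
        (w c)\<^sup>2 * L2sq (cell_fn_raw (fst c) (snd c))"
      by (simp add: power2_eq_square)
  qed
  also have "\<dots> = (\<Sum>c\<in>cell_idx p. \<bar>a c\<bar>\<^sup>2)"
    using less_imp_le[OF L2sq_cell_fn_raw_pos] L2sq_cell_fn_raw_pos[THEN less_imp_neq, THEN not_sym]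
    by (intro sum.cong refl) (simp add: w_def cell_const_def power_mult_distrib power_divide)
  finally show ?thesis .
qed

section \<open>The vertex functions and the whole basis\<close>

lemma continuous_on_vertex_sum: "continuous_on Khat (\<lambda>x. \<Sum>j\<in>{1..3}. a j * vertex_fn j x)"
  unfolding vertex_fn_def by (intro continuous_intros)

lemma sum_bary_sq_le_1:
  assumes "x \<in> Khat"
  shows "(\<Sum>j\<in>{1..3::nat}. (bary j x)\<^sup>2) \<le> 1"
proof -
  have "{1..3::nat} = {1, 2, 3}"
    by auto
  moreover have "(bary j x)\<^sup>2 \<le> bary j x" for j
  proof -
    have "bary j x \<le> 1"
      using assms by (cases x) (auto simp: bary_def mem_Khat)
    then show ?thesis
      using bary_nonneg[OF assms, of j] by (simp add: power2_eq_square mult_left_le_one_le)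
  qed
  ultimately have "(\<Sum>j\<in>{1..3::nat}. (bary j x)\<^sup>2) \<le> bary 1 x + bary 2 x + bary 3 x"
    using sum_mono[of "{1, 2, 3 :: nat}" "\<lambda>j. (bary j x)\<^sup>2" "\<lambda>j. bary j x"] by simp
  then show ?thesis
    by (simp add: bary_def)
qed

lemma L2sq_vertex_sum_le:
  "L2sq (\<lambda>x. \<Sum>j\<in>{1..3}. a j * vertex_fn j x) \<le> (\<Sum>j\<in>{1..3}. (a j)\<^sup>2)"
proof -
  define S where "S = (\<Sum>j\<in>{1..3::nat}. (a j)\<^sup>2)"
  have S: "0 \<le> S"
    unfolding S_def by (intro sum_nonneg) simp
  have "(\<Sum>j\<in>{1..3}. a j * vertex_fn j x)\<^sup>2 \<le> S" if "x \<in> Khat" for x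
  proof -
    have "(\<Sum>j\<in>{1..3}. a j * vertex_fn j x)\<^sup>2 \<le> S * (\<Sum>j\<in>{1..3::nat}. (vertex_fn j x)\<^sup>2)"
      unfolding S_def by (rule Cauchy_Schwarz_ineq_sum)
    also have "\<dots> \<le> S"
      using S sum_bary_sq_le_1[OF that] by (simp add: vertex_fn_def mult_left_le)
    finally show ?thesis .
  qed
  then have "L2sq (\<lambda>x. \<Sum>j\<in>{1..3}. a j * vertex_fn j x) \<le> integral Khat (\<lambda>x. S)"
    unfolding L2sq_def
    by (intro integral_le integrable_on_Khat continuous_intros continuous_on_vertex_sum) auto
  also have "\<dots> = S / 2"
    using integral_Khat_1 integral_mult_right[of Khat S "\<lambda>x. 1 :: real"] by simp
  finally show ?thesis
    using S unfolding S_def by simp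
qed

lemma sq_sum5_le: "(a + b + c + d + e)\<^sup>2 \<le> 5 * (a\<^sup>2 + b\<^sup>2 + c\<^sup>2 + d\<^sup>2 + e\<^sup>2 :: real)"
proof -
  have "5 * (a\<^sup>2 + b\<^sup>2 + c\<^sup>2 + d\<^sup>2 + e\<^sup>2) - (a + b + c + d + e)\<^sup>2 =
      (a - b)\<^sup>2 + (a - c)\<^sup>2 + (a - d)\<^sup>2 + (a - e)\<^sup>2 + (b - c)\<^sup>2 + (b - d)\<^sup>2 + (b - e)\<^sup>2 +
      (c - d)\<^sup>2 + (c - e)\<^sup>2 + (d - e)\<^sup>2"
    by (simp add: power2_eq_square algebra_simps)
  moreover have "0 \<le> (a - b)\<^sup>2 + (a - c)\<^sup>2 + (a - d)\<^sup>2 + (a - e)\<^sup>2 + (b - c)\<^sup>2 + (b - d)\<^sup>2 + (b - e)\<^sup>2 +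
      (c - d)\<^sup>2 + (c - e)\<^sup>2 + (d - e)\<^sup>2"
    by simp
  ultimately show ?thesis
    by linarith
qed

lemma L2sq_add5_le:
  assumes "continuous_on Khat f1" "continuous_on Khat f2" "continuous_on Khat f3"
    "continuous_on Khat f4" "continuous_on Khat f5"
    and "L2sq f1 \<le> b1" "L2sq f2 \<le> b2" "L2sq f3 \<le> b3" "L2sq f4 \<le> b4" "L2sq f5 \<le> b5"
  shows "L2sq (\<lambda>x. f1 x + f2 x + f3 x + f4 x + f5 x) \<le> 5 * (b1 + b2 + b3 + b4 + b5)"
proof -
  have int: "(\<lambda>x. (f x)\<^sup>2) integrable_on Khat" if "continuous_on Khat f" for f :: "pt \<Rightarrow> real"
    by (intro integrable_on_Khat continuous_intros that)
  have "L2sq (\<lambda>x. f1 x + f2 x + f3 x + f4 x + f5 x)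
      \<le> integral Khat (\<lambda>x. 5 * ((f1 x)\<^sup>2 + (f2 x)\<^sup>2 + (f3 x)\<^sup>2 + (f4 x)\<^sup>2 + (f5 x)\<^sup>2))"
    unfolding L2sq_def by (intro integral_le integrable_on_Khat continuous_intros assms sq_sum5_le)
  also have "\<dots> = 5 * (L2sq f1 + L2sq f2 + L2sq f3 + L2sq f4 + L2sq f5)"
    unfolding L2sq_def integral_mult_right
    by (simp add: integral_add integrable_add int assms)
  also have "\<dots> \<le> 5 * (b1 + b2 + b3 + b4 + b5)"
    using assms(6-) by simp
  finally show ?thesis .
qed

theorem lemma4p2:
  "\<exists>C>0. \<forall>(p::nat) (aV::nat \<Rightarrow> real) (aE::nat \<Rightarrow> nat \<Rightarrow> real) (aI::nat \<times> nat \<Rightarrow> real).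
     p \<ge> 1 \<longrightarrow>
     (let uV = (\<lambda>x. \<Sum>j\<in>{1..3}. aV j * vertex_fn j x);
          uE = (\<lambda>m x. \<Sum>j\<in>edge_idx p. aE m j * edge_fn m j x);
          uI = (\<lambda>x. \<Sum>(i,j)\<in>cell_idx p. aI (i,j) * cell_fn i j x);
          u = (\<lambda>x. uV x + uE 1 x + uE 2 x + uE 3 x + uI x)
      in L2sq uV \<le> C * (\<Sum>j\<in>{1..3}. \<bar>aV j\<bar>\<^sup>2)
       \<and> (\<forall>m\<in>{1..3}. L2sq (uE m) \<le> C * (\<Sum>j\<in>edge_idx p. \<bar>aE m j\<bar>\<^sup>2))
       \<and> L2sq uI = (\<Sum>ij\<in>cell_idx p. \<bar>aI ij\<bar>\<^sup>2)
       \<and> L2sq u \<le> C * ((\<Sum>j\<in>{1..3}. \<bar>aV j\<bar>\<^sup>2)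
                       + (\<Sum>m\<in>{1..3}. \<Sum>j\<in>edge_idx p. \<bar>aE m j\<bar>\<^sup>2)
                       + (\<Sum>ij\<in>cell_idx p. \<bar>aI ij\<bar>\<^sup>2)))"
proof (rule exI[of _ 15], intro conjI allI impI, goal_cases)
  case 1
  show ?case by simp
next
  case (2 p aV aE aI)
  let ?uV = "\<lambda>x. \<Sum>j\<in>{1..3}. aV j * vertex_fn j x"
  let ?uE = "\<lambda>m x. \<Sum>j\<in>edge_idx p. aE m j * edge_fn m j x"
  let ?uI = "\<lambda>x. \<Sum>(i, j)\<in>cell_idx p. aI (i, j) * cell_fn i j x"
  let ?SV = "\<Sum>j\<in>{1..3}. \<bar>aV j\<bar>\<^sup>2"
  let ?SE = "\<lambda>m. \<Sum>j\<in>edge_idx p. \<bar>aE m j\<bar>\<^sup>2"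
  let ?SI = "\<Sum>ij\<in>cell_idx p. \<bar>aI ij\<bar>\<^sup>2"
  have V: "L2sq ?uV \<le> ?SV" and E: "L2sq (?uE m) \<le> ?SE m" and I: "L2sq ?uI = ?SI" for m
    using L2sq_vertex_sum_le[where a=aV] L2sq_edge_sum_le[where a="aE m"] L2sq_cell_sum[of aI p]
    by simp_all
  have nonneg: "0 \<le> ?SV" "0 \<le> ?SE m" "0 \<le> ?SI" for m
    by (simp_all add: sum_nonneg)
  have "L2sq (\<lambda>x. ?uV x + ?uE 1 x + ?uE 2 x + ?uE 3 x + ?uI x) \<le> 5 * (?SV + ?SE 1 + ?SE 2 + ?SE 3 + ?SI)"
    by (intro L2sq_add5_le V E I[THEN eq_refl] continuous_on_vertex_sum continuous_on_edge_sum
        continuous_on_cell_sum)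
  moreover have "(\<Sum>m\<in>{1..3}. ?SE m) = ?SE 1 + ?SE 2 + ?SE 3"
    by (simp add: eval_nat_numeral atLeastAtMostSuc_conv)
  ultimately have total: "L2sq (\<lambda>x. ?uV x + ?uE 1 x + ?uE 2 x + ?uE 3 x + ?uI x) \<le>
      15 * (?SV + (\<Sum>m\<in>{1..3}. ?SE m) + ?SI)"
    using nonneg(1,3) nonneg(2)[of 1] nonneg(2)[of 2] nonneg(2)[of 3] by argo
  show ?case
    unfolding Let_def
  proof (intro conjI ballI)
    show "L2sq ?uV \<le> 15 * ?SV" "L2sq (?uE m) \<le> 15 * ?SE m" for m
      using V E[of m] nonneg(1) nonneg(2)[of m] by linarith+
  qed (fact I total)+
qed

end
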